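(* Let $\alpha\in(0,1]$ and let $T$ be a bounded linear operator on a separable Hilbert space $\mathcal{H}$ with $\sum_{s=1}^\infty\frac{\|T^s\|^2}{(s+1)^\alpha}\le1$. Then there exist a Hilbert space $E$ and a $D^*_{\alpha,E}$-invariant subspace $\mathcal{N}\subseteq\mathcal{D}_{\alpha,E}$ such that $T$ is unitarily equivalent to $D^*_{\alpha,E}|_{\mathcal{N}}$.
   Context: For $\alpha\in(0,1]$, $\mathcal{D}_\alpha$ is the weighted Dirichlet space of holomorphic $f(z)=\sum_{n\ge0}\hat f(n)z^n$ on the unit disk with $\|f\|^2=\sum_{n\ge0}(n+1)^\alpha|\hat f(n)|^2<\infty$; for a separable Hilbert space $E$, $\mathcal{D}_{\alpha,E}=\mathcal{D}_\alpha\otimes E$ is the corresponding $E$-valued space, and $D^*_{\alpha,E}$ is the adjoint of the operator of multiplication by $z$ on $\mathcal{D}_{\alpha,E}$. *)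

theory Defs
  imports Complex_Main "HOL-Library.Countable_Set"
begin

record 'a chs =
  hcarrier :: "'a set"
  hzero    :: 'a
  hplus    :: "'a \<Rightarrow> 'a \<Rightarrow> 'a"
  hscale   :: "complex \<Rightarrow> 'a \<Rightarrow> 'a"
  hip      :: "'a \<Rightarrow> 'a \<Rightarrow> complex"

definition hnorm :: "'a chs \<Rightarrow> 'a \<Rightarrow> real" where
  "hnorm H x = sqrt (Re (hip H x x))"

definition hminus :: "'a chs \<Rightarrow> 'a \<Rightarrow> 'a \<Rightarrow> 'a" where
  "hminus H x y = hplus H x (hscale H (-1) y)"

definition inner_product_space :: "'a chs \<Rightarrow> bool" where
  "inner_product_space H \<longleftrightarrow>
     hzero H \<in> hcarrier H \<and>
     (\<forall>x\<in>hcarrier H. \<forall>y\<in>hcarrier H. hplus H x y \<in> hcarrier H) \<and>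
     (\<forall>a. \<forall>x\<in>hcarrier H. hscale H a x \<in> hcarrier H) \<and>
     (\<forall>x\<in>hcarrier H. \<forall>y\<in>hcarrier H. \<forall>z\<in>hcarrier H.
        hplus H (hplus H x y) z = hplus H x (hplus H y z)) \<and>
     (\<forall>x\<in>hcarrier H. \<forall>y\<in>hcarrier H. hplus H x y = hplus H y x) \<and>
     (\<forall>x\<in>hcarrier H. hplus H x (hzero H) = x) \<and>
     (\<forall>x\<in>hcarrier H. hplus H x (hscale H (-1) x) = hzero H) \<and>
     (\<forall>x\<in>hcarrier H. hscale H 1 x = x) \<and>
     (\<forall>a b. \<forall>x\<in>hcarrier H. hscale H a (hscale H b x) = hscale H (a * b) x) \<and>
     (\<forall>a. \<forall>x\<in>hcarrier H. \<forall>y\<in>hcarrier H.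
        hscale H a (hplus H x y) = hplus H (hscale H a x) (hscale H a y)) \<and>
     (\<forall>a b. \<forall>x\<in>hcarrier H. hscale H (a + b) x = hplus H (hscale H a x) (hscale H b x)) \<and>
     (\<forall>x\<in>hcarrier H. \<forall>y\<in>hcarrier H. \<forall>z\<in>hcarrier H.
        hip H (hplus H x y) z = hip H x z + hip H y z) \<and>
     (\<forall>a. \<forall>x\<in>hcarrier H. \<forall>y\<in>hcarrier H. hip H (hscale H a x) y = a * hip H x y) \<and>
     (\<forall>x\<in>hcarrier H. \<forall>y\<in>hcarrier H. hip H y x = cnj (hip H x y)) \<and>
     (\<forall>x\<in>hcarrier H. Im (hip H x x) = 0 \<and> Re (hip H x x) \<ge> 0) \<and>
     (\<forall>x\<in>hcarrier H. hip H x x = 0 \<longrightarrow> x = hzero H)"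

definition hilbert_space :: "'a chs \<Rightarrow> bool" where
  "hilbert_space H \<longleftrightarrow> inner_product_space H \<and>
     (\<forall>X. (\<forall>n. X n \<in> hcarrier H) \<and>
          (\<forall>e>0. \<exists>N. \<forall>m\<ge>N. \<forall>n\<ge>N. hnorm H (hminus H (X m) (X n)) < e)
          \<longrightarrow> (\<exists>x\<in>hcarrier H. (\<lambda>n. hnorm H (hminus H (X n) x)) \<longlonglongrightarrow> 0))"

definition separable :: "'a chs \<Rightarrow> bool" where
  "separable H \<longleftrightarrow> (\<exists>S. countable S \<and> S \<subseteq> hcarrier H \<and>
     (\<forall>x\<in>hcarrier H. \<forall>e>0. \<exists>s\<in>S. hnorm H (hminus H x s) < e))"

definition bounded_op :: "'a chs \<Rightarrow> ('a \<Rightarrow> 'a) \<Rightarrow> bool" where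
  "bounded_op H A \<longleftrightarrow>
     (\<forall>x\<in>hcarrier H. A x \<in> hcarrier H) \<and>
     (\<forall>x\<in>hcarrier H. \<forall>y\<in>hcarrier H. A (hplus H x y) = hplus H (A x) (A y)) \<and>
     (\<forall>a. \<forall>x\<in>hcarrier H. A (hscale H a x) = hscale H a (A x)) \<and>
     (\<exists>K. \<forall>x\<in>hcarrier H. hnorm H (A x) \<le> K * hnorm H x)"

definition opnorm :: "'a chs \<Rightarrow> ('a \<Rightarrow> 'a) \<Rightarrow> real" where
  "opnorm H A = Sup {hnorm H (A x) | x. x \<in> hcarrier H \<and> hnorm H x \<le> 1}"

definition adjoint :: "'a chs \<Rightarrow> ('a \<Rightarrow> 'a) \<Rightarrow> ('a \<Rightarrow> 'a)" where
  "adjoint H A = (SOME B. (\<forall>y\<in>hcarrier H. B y \<in> hcarrier H) \<and>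
      (\<forall>x\<in>hcarrier H. \<forall>y\<in>hcarrier H. hip H (A x) y = hip H x (B y)))"

text \<open>The E-valued weighted Dirichlet space D_{alpha,E}, realised through Taylor
  coefficient sequences: f = sum f(n) z^n, norm^2 = sum (n+1)^alpha |f(n)|^2.\<close>
definition dirichlet :: "real \<Rightarrow> 'a chs \<Rightarrow> (nat \<Rightarrow> 'a) chs" where
  "dirichlet \<alpha> E =
     \<lparr> hcarrier = {f. (\<forall>n. f n \<in> hcarrier E) \<and>
                     summable (\<lambda>n. real (n + 1) powr \<alpha> * (hnorm E (f n))\<^sup>2)},
       hzero = (\<lambda>n. hzero E),
       hplus = (\<lambda>f g n. hplus E (f n) (g n)),
       hscale = (\<lambda>a f n. hscale E a (f n)),
       hip = (\<lambda>f g. \<Sum>n. complex_of_real (real (n + 1) powr \<alpha>) * hip E (f n) (g n)) \<rparr>"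

definition mult_z :: "'a chs \<Rightarrow> (nat \<Rightarrow> 'a) \<Rightarrow> (nat \<Rightarrow> 'a)" where
  "mult_z E f = (\<lambda>n. if n = 0 then hzero E else f (n - 1))"

definition Dstar :: "real \<Rightarrow> 'a chs \<Rightarrow> (nat \<Rightarrow> 'a) \<Rightarrow> (nat \<Rightarrow> 'a)" where
  "Dstar \<alpha> E = adjoint (dirichlet \<alpha> E) (mult_z E)"

definition closed_subspace :: "'a chs \<Rightarrow> 'a set \<Rightarrow> bool" where
  "closed_subspace H N \<longleftrightarrow> N \<subseteq> hcarrier H \<and> hzero H \<in> N \<and>
     (\<forall>x\<in>N. \<forall>y\<in>N. hplus H x y \<in> N) \<and> (\<forall>a. \<forall>x\<in>N. hscale H a x \<in> N) \<and>
     (\<forall>X x. (\<forall>n. X n \<in> N) \<and> x \<in> hcarrier H \<and>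
        (\<lambda>n. hnorm H (hminus H (X n) x)) \<longlonglongrightarrow> 0 \<longrightarrow> x \<in> N)"

definition unitarily_equivalent ::
  "'a chs \<Rightarrow> ('a \<Rightarrow> 'a) \<Rightarrow> 'b chs \<Rightarrow> 'b set \<Rightarrow> ('b \<Rightarrow> 'b) \<Rightarrow> bool" where
  "unitarily_equivalent H T K N B \<longleftrightarrow>
     (\<exists>U. bij_betw U (hcarrier H) N \<and>
          (\<forall>x\<in>hcarrier H. \<forall>y\<in>hcarrier H. U (hplus H x y) = hplus K (U x) (U y)) \<and>
          (\<forall>a. \<forall>x\<in>hcarrier H. U (hscale H a x) = hscale K a (U x)) \<and>
          (\<forall>x\<in>hcarrier H. \<forall>y\<in>hcarrier H. hip K (U x) (U y) = hip H x y) \<and>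
          (\<forall>x\<in>hcarrier H. U (T x) = B (U x)))"

end

theory Submission
  imports Defs "HOL-Computational_Algebra.Formal_Power_Series"
begin

text \<open>
  The coefficients \<open>a n = (n + 1) powr -\<alpha>\<close> of the kernel of \<open>\<D>\<^sub>\<alpha>\<close> are log-convex, so by
  Kaluza's lemma the reciprocal series \<open>\<Sum> c n z\<^sup>n\<close> of \<open>\<Sum> a n z\<^sup>n\<close> has \<open>c 0 = 1\<close> and
  \<open>-a n \<le> c n \<le> 0\<close> for \<open>n \<ge> 1\<close>. Hence the defect form
  \<open>Q x y = \<Sum> c n \<langle>T\<^sup>n x, T\<^sup>n y\<rangle>\<close> satisfies \<open>0 \<le> Q x x \<le> \<parallel>x\<parallel>\<^sup>2\<close> by the hypothesis on
  \<open>\<parallel>T\<^sup>s\<parallel>\<close>, and summing the convolution identity \<open>\<Sum>\<^sub>k\<^sub>\<le>\<^sub>m a k c (m - k) = \<delta>\<^sub>m\<^sub>0\<close> along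
  diagonals gives \<open>\<Sum> a n Q (T\<^sup>n x) (T\<^sup>n y) = \<langle>x, y\<rangle>\<close>.
  Writing \<open>Q x y = \<langle>V x, V y\<rangle>\<close> for a linear \<open>V : H \<rightarrow> H\<close> (obtained by Gram-Schmidt, using
  separability and completeness), the map \<open>U x = (a n \<cdot> V (T\<^sup>n x))\<^sub>n\<close> is an isometry of \<open>H\<close>
  into \<open>\<D>\<^sub>\<alpha>\<^sub>,\<^sub>H\<close>, and \<open>U T = D\<^sup>* U\<close> because \<open>D\<^sup>*\<close> acts on coefficients by
  \<open>g n \<mapsto> ((n + 2) / (n + 1)) powr \<alpha> \<cdot> g (n + 1)\<close>. As \<open>H\<close> is complete, the range of \<open>U\<close> is closed;
  so \<open>E = H\<close> works.
\<close>

section \<open>Inner product spaces given by a carrier\<close>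

primrec hsum :: "'a chs \<Rightarrow> (nat \<Rightarrow> 'a) \<Rightarrow> nat \<Rightarrow> 'a" where
  "hsum H f 0 = hzero H"
| "hsum H f (Suc n) = hplus H (hsum H f n) (f n)"

lemma hsum_cong: "(\<And>j. j < n \<Longrightarrow> f j = g j) \<Longrightarrow> hsum H f n = hsum H g n"
  by (induction n) auto

locale ip_space =
  fixes H :: "'a chs"
  assumes inner_product_space: "inner_product_space H"
begin

lemma zero_closed[simp]: "hzero H \<in> hcarrier H"
  using inner_product_space unfolding inner_product_space_def by metis
lemma add_closed[simp]: "x \<in> hcarrier H \<Longrightarrow> y \<in> hcarrier H \<Longrightarrow> hplus H x y \<in> hcarrier H"
  using inner_product_space unfolding inner_product_space_def by metis
lemma scale_closed[simp]: "x \<in> hcarrier H \<Longrightarrow> hscale H a x \<in> hcarrier H"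
  using inner_product_space unfolding inner_product_space_def by metis
lemma add_assoc: "x \<in> hcarrier H \<Longrightarrow> y \<in> hcarrier H \<Longrightarrow> z \<in> hcarrier H \<Longrightarrow>
     hplus H (hplus H x y) z = hplus H x (hplus H y z)"
  using inner_product_space unfolding inner_product_space_def by metis
lemma add_commute: "x \<in> hcarrier H \<Longrightarrow> y \<in> hcarrier H \<Longrightarrow> hplus H x y = hplus H y x"
  using inner_product_space unfolding inner_product_space_def by metis
lemma add_zero_right[simp]: "x \<in> hcarrier H \<Longrightarrow> hplus H x (hzero H) = x"
  using inner_product_space unfolding inner_product_space_def by metis
lemma add_neg: "x \<in> hcarrier H \<Longrightarrow> hplus H x (hscale H (-1) x) = hzero H"
  using inner_product_space unfolding inner_product_space_def by metis
lemma scale_one[simp]: "x \<in> hcarrier H \<Longrightarrow> hscale H 1 x = x"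
  using inner_product_space unfolding inner_product_space_def by metis
lemma scale_scale: "x \<in> hcarrier H \<Longrightarrow> hscale H a (hscale H b x) = hscale H (a * b) x"
  using inner_product_space unfolding inner_product_space_def by metis
lemma inner_add_left[simp]: "x \<in> hcarrier H \<Longrightarrow> y \<in> hcarrier H \<Longrightarrow> z \<in> hcarrier H \<Longrightarrow>
     hip H (hplus H x y) z = hip H x z + hip H y z"
  using inner_product_space unfolding inner_product_space_def by metis
lemma inner_scale_left[simp]: "x \<in> hcarrier H \<Longrightarrow> y \<in> hcarrier H \<Longrightarrow>
     hip H (hscale H a x) y = a * hip H x y"
  using inner_product_space unfolding inner_product_space_def by metis
lemma inner_cnj: "x \<in> hcarrier H \<Longrightarrow> y \<in> hcarrier H \<Longrightarrow> hip H y x = cnj (hip H x y)"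
  using inner_product_space unfolding inner_product_space_def by metis
lemma inner_self_nonneg: "x \<in> hcarrier H \<Longrightarrow> Im (hip H x x) = 0 \<and> 0 \<le> Re (hip H x x)"
  using inner_product_space unfolding inner_product_space_def by metis
lemma inner_self_eq_zeroD: "x \<in> hcarrier H \<Longrightarrow> hip H x x = 0 \<Longrightarrow> x = hzero H"
  using inner_product_space unfolding inner_product_space_def by metis

lemma diff_closed[simp]: "x \<in> hcarrier H \<Longrightarrow> y \<in> hcarrier H \<Longrightarrow> hminus H x y \<in> hcarrier H"
  unfolding hminus_def by simp

lemma hsum_closed[simp]: "(\<And>j. j < n \<Longrightarrow> f j \<in> hcarrier H) \<Longrightarrow> hsum H f n \<in> hcarrier H"
  by (induction n) auto

end

lemma le_mult_of_quadratic_nonneg: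
  fixes p q B :: real
  assumes "0 \<le> q" and "0 \<le> B" and quadratic_nonneg: "\<And>s. 0 \<le> p - 2 * s * B + s\<^sup>2 * B * q"
  shows "B \<le> p * q"
proof (cases "q > 0")
  case True
  have "0 \<le> p - 2 * (1/q) * B + (1/q)\<^sup>2 * B * q" by (rule quadratic_nonneg)
  with True have "B / q \<le> p" by (simp add: power2_eq_square)
  with True show ?thesis by (simp add: pos_divide_le_eq mult.commute)
next
  case False
  with \<open>0 \<le> q\<close> have "q = 0" by simp
  have "B = 0"
  proof (rule ccontr)
    assume "B \<noteq> 0"
    with \<open>0 \<le> B\<close> have "B > 0" by simp
    have "0 \<le> p - 2 * ((p + 1) / (2 * B)) * B" using quadratic_nonneg[of "(p+1)/(2*B)"] \<open>q = 0\<close> by simp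
    with \<open>B > 0\<close> show False by simp
  qed
  with \<open>q = 0\<close> show ?thesis by simp
qed

locale psd_form = ip_space +
  fixes F :: "'a \<Rightarrow> 'a \<Rightarrow> complex"
  assumes form_add_left[simp]: "x \<in> hcarrier H \<Longrightarrow> y \<in> hcarrier H \<Longrightarrow> z \<in> hcarrier H \<Longrightarrow>
      F (hplus H x y) z = F x z + F y z"
    and form_scale_left[simp]: "x \<in> hcarrier H \<Longrightarrow> y \<in> hcarrier H \<Longrightarrow> F (hscale H a x) y = a * F x y"
    and form_cnj: "x \<in> hcarrier H \<Longrightarrow> y \<in> hcarrier H \<Longrightarrow> F y x = cnj (F x y)"
    and form_self_nonneg: "x \<in> hcarrier H \<Longrightarrow> Im (F x x) = 0 \<and> 0 \<le> Re (F x x)"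
begin

lemma form_add_right[simp]: "x \<in> hcarrier H \<Longrightarrow> y \<in> hcarrier H \<Longrightarrow> z \<in> hcarrier H \<Longrightarrow>
   F x (hplus H y z) = F x y + F x z"
  by (subst form_cnj, simp_all, subst (1 2) form_cnj, simp_all)

lemma form_scale_right[simp]: "x \<in> hcarrier H \<Longrightarrow> y \<in> hcarrier H \<Longrightarrow> F x (hscale H a y) = cnj a * F x y"
  by (subst form_cnj, simp_all, subst form_cnj, simp_all)

lemma form_zero_left[simp]: "y \<in> hcarrier H \<Longrightarrow> F (hzero H) y = 0"
  using form_add_left[of "hzero H" "hzero H" y] by simp

lemma form_zero_right[simp]: "y \<in> hcarrier H \<Longrightarrow> F y (hzero H) = 0"
  by (subst form_cnj) simp_all

lemma form_diff_left[simp]: "x \<in> hcarrier H \<Longrightarrow> y \<in> hcarrier H \<Longrightarrow> z \<in> hcarrier H \<Longrightarrow>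
   F (hminus H x y) z = F x z - F y z"
  unfolding hminus_def by simp

lemma form_diff_right[simp]: "x \<in> hcarrier H \<Longrightarrow> y \<in> hcarrier H \<Longrightarrow> z \<in> hcarrier H \<Longrightarrow>
   F z (hminus H x y) = F z x - F z y"
  unfolding hminus_def by simp

lemma form_self_real: "x \<in> hcarrier H \<Longrightarrow> F x x = complex_of_real (Re (F x x))"
  using form_self_nonneg by (simp add: complex_eq_iff)

lemma form_hsum_left: "(\<And>j. j < n \<Longrightarrow> f j \<in> hcarrier H) \<Longrightarrow> z \<in> hcarrier H \<Longrightarrow>
   F (hsum H f n) z = (\<Sum>j<n. F (f j) z)"
  by (induction n) auto

lemma form_hsum_right: "(\<And>j. j < n \<Longrightarrow> f j \<in> hcarrier H) \<Longrightarrow> z \<in> hcarrier H \<Longrightarrow>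
   F z (hsum H f n) = (\<Sum>j<n. F z (f j))"
  by (induction n) auto

lemma form_cauchy_schwarz_sq:
  assumes x: "x \<in> hcarrier H" and y: "y \<in> hcarrier H"
  shows "(cmod (F x y))\<^sup>2 \<le> Re (F x x) * Re (F y y)"
proof -
  define p q b where "p = Re (F x x)" and "q = Re (F y y)" and "b = F x y"
  define B where "B = (cmod b)\<^sup>2"
  have b_cnj: "b * cnj b = complex_of_real B" "cnj b * b = complex_of_real B"
    unfolding B_def by (metis complex_norm_square, metis complex_norm_square mult.commute)
  have "0 \<le> p - 2 * s * B + s\<^sup>2 * B * q" for s :: real
  proof -
    define t where "t = complex_of_real s * b"
    have "F (hminus H x (hscale H t y)) (hminus H x (hscale H t y))
        = F x x - cnj t * F x y - (t * F y x - (t * cnj t) * F y y)"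
      using x y by (simp add: algebra_simps)
    also have "\<dots> = complex_of_real (p - 2 * s * B + s\<^sup>2 * B * q)"
      using b_cnj form_cnj[OF x y] form_self_real[OF x] form_self_real[OF y]
      unfolding t_def p_def q_def b_def by (simp add: algebra_simps power2_eq_square)
    finally show ?thesis
      using form_self_nonneg[of "hminus H x (hscale H t y)"] x y by simp
  qed
  moreover have "0 \<le> q" unfolding q_def using form_self_nonneg y by simp
  ultimately have "B \<le> p * q" by (intro le_mult_of_quadratic_nonneg) (simp_all add: B_def)
  then show ?thesis by (simp add: B_def b_def p_def q_def)
qed

lemma form_cauchy_schwarz:
  assumes "x \<in> hcarrier H" and "y \<in> hcarrier H"
  shows "cmod (F x y) \<le> sqrt (Re (F x x)) * sqrt (Re (F y y))"
  using real_sqrt_le_mono[OF form_cauchy_schwarz_sq[OF assms]] by (simp add: real_sqrt_mult)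

lemma form_null_left: "n \<in> hcarrier H \<Longrightarrow> y \<in> hcarrier H \<Longrightarrow> Re (F n n) = 0 \<Longrightarrow> F n y = 0"
  using form_cauchy_schwarz_sq[of n y] by (simp add: power2_less_eq_zero_iff)

lemma form_null_right: "n \<in> hcarrier H \<Longrightarrow> y \<in> hcarrier H \<Longrightarrow> Re (F n n) = 0 \<Longrightarrow> F y n = 0"
  using form_cnj[of n y] form_null_left[of n y] by simp

lemma form_triangle:
  assumes x: "x \<in> hcarrier H" and y: "y \<in> hcarrier H"
  shows "sqrt (Re (F (hplus H x y) (hplus H x y))) \<le> sqrt (Re (F x x)) + sqrt (Re (F y y))"
proof -
  have p: "0 \<le> Re (F x x)" and q: "0 \<le> Re (F y y)" using form_self_nonneg x y by auto
  have "Re (F x y) \<le> sqrt (Re (F x x)) * sqrt (Re (F y y))"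
    using form_cauchy_schwarz[OF x y] complex_Re_le_cmod order_trans by blast
  moreover have "Re (F y x) = Re (F x y)" using form_cnj[OF x y] by simp
  ultimately have "Re (F (hplus H x y) (hplus H x y)) \<le> (sqrt (Re (F x x)) + sqrt (Re (F y y)))\<^sup>2"
    using x y p q by (simp add: power2_eq_square algebra_simps)
  then show ?thesis
    by (metis add_nonneg_nonneg p q real_sqrt_ge_zero real_sqrt_le_mono real_sqrt_unique)
qed

end

sublocale ip_space \<subseteq> inner: psd_form H "hip H"
  by unfold_locales (auto simp: inner_self_nonneg intro: inner_cnj)

context ip_space
begin

lemma inner_ext:
  assumes x: "x \<in> hcarrier H" and y: "y \<in> hcarrier H"
    and eq: "\<And>z. z \<in> hcarrier H \<Longrightarrow> hip H x z = hip H y z"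
  shows "x = y"
proof -
  let ?d = "hminus H x y"
  have "hip H ?d ?d = hip H x ?d - hip H y ?d" using x y unfolding hminus_def by simp
  also have "\<dots> = 0" using eq[of ?d] x y by simp
  finally have "?d = hzero H" using inner_self_eq_zeroD x y by simp
  moreover have "hplus H y ?d = x"
    unfolding hminus_def using x y by (metis add_assoc add_commute add_neg add_zero_right scale_closed)
  ultimately show ?thesis using y by simp
qed

lemma diff_eq_zeroD:
  assumes "x \<in> hcarrier H" and "y \<in> hcarrier H" and "hminus H x y = hzero H"
  shows "x = y"
proof (rule inner_ext[OF assms(1,2)])
  fix z assume "z \<in> hcarrier H"
  then have "hip H (hminus H x y) z = 0" using assms(3) by simp
  with assms(1,2) \<open>z \<in> hcarrier H\<close> show "hip H x z = hip H y z" by simp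
qed

lemma scale_add_right: "x \<in> hcarrier H \<Longrightarrow> y \<in> hcarrier H \<Longrightarrow>
   hscale H a (hplus H x y) = hplus H (hscale H a x) (hscale H a y)"
  by (rule inner_ext) (simp_all add: algebra_simps)

lemma scale_add_left: "x \<in> hcarrier H \<Longrightarrow> hscale H (a + b) x = hplus H (hscale H a x) (hscale H b x)"
  by (rule inner_ext) (simp_all add: algebra_simps)

lemma scale_zero_left: "x \<in> hcarrier H \<Longrightarrow> hscale H 0 x = hzero H"
  by (rule inner_ext) simp_all

lemma scale_zero_right: "hscale H a (hzero H) = hzero H"
  by (rule inner_ext) simp_all

lemma inner_self_eq_zero_iff: "x \<in> hcarrier H \<Longrightarrow> hip H x x = 0 \<longleftrightarrow> x = hzero H"
  using inner_self_eq_zeroD by auto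

lemma hnorm_sq: "x \<in> hcarrier H \<Longrightarrow> (hnorm H x)\<^sup>2 = Re (hip H x x)"
  unfolding hnorm_def using inner_self_nonneg[of x] by simp

lemma inner_self_eq_hnorm_sq: "x \<in> hcarrier H \<Longrightarrow> hip H x x = complex_of_real ((hnorm H x)\<^sup>2)"
  using inner.form_self_real hnorm_sq by simp

lemma hnorm_nonneg[simp]: "x \<in> hcarrier H \<Longrightarrow> 0 \<le> hnorm H x"
  unfolding hnorm_def using inner_self_nonneg by simp

lemma hnorm_eq_zero_iff: "x \<in> hcarrier H \<Longrightarrow> hnorm H x = 0 \<longleftrightarrow> x = hzero H"
proof -
  assume x: "x \<in> hcarrier H"
  then have "hip H x x = 0 \<longleftrightarrow> Re (hip H x x) = 0" using inner_self_nonneg by (simp add: complex_eq_iff)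
  then show ?thesis unfolding hnorm_def using inner_self_eq_zero_iff[OF x] by simp
qed

lemma hnorm_zero[simp]: "hnorm H (hzero H) = 0"
  using hnorm_eq_zero_iff by simp

lemma hnorm_scale: "x \<in> hcarrier H \<Longrightarrow> hnorm H (hscale H a x) = cmod a * hnorm H x"
proof -
  assume x: "x \<in> hcarrier H"
  have "hip H (hscale H a x) (hscale H a x) = (a * cnj a) * hip H x x"
    using x by (simp add: mult.assoc)
  also have "\<dots> = complex_of_real ((cmod a)\<^sup>2 * Re (hip H x x))"
    using inner.form_self_real[OF x] complex_norm_square[of a] by (metis of_real_mult)
  finally have "Re (hip H (hscale H a x) (hscale H a x)) = (cmod a)\<^sup>2 * Re (hip H x x)" by simp
  then show ?thesis unfolding hnorm_def by (simp add: real_sqrt_mult)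
qed

lemma hnorm_cauchy_schwarz: "x \<in> hcarrier H \<Longrightarrow> y \<in> hcarrier H \<Longrightarrow> cmod (hip H x y) \<le> hnorm H x * hnorm H y"
  using inner.form_cauchy_schwarz unfolding hnorm_def by blast

lemma hnorm_triangle: "x \<in> hcarrier H \<Longrightarrow> y \<in> hcarrier H \<Longrightarrow> hnorm H (hplus H x y) \<le> hnorm H x + hnorm H y"
  using inner.form_triangle unfolding hnorm_def by blast

lemma hnorm_diff_commute: "x \<in> hcarrier H \<Longrightarrow> y \<in> hcarrier H \<Longrightarrow> hnorm H (hminus H x y) = hnorm H (hminus H y x)"
proof -
  assume "x \<in> hcarrier H" "y \<in> hcarrier H"
  then have "hminus H x y = hscale H (-1) (hminus H y x)" by (intro inner_ext) simp_all
  with \<open>x \<in> hcarrier H\<close> \<open>y \<in> hcarrier H\<close> show ?thesis by (simp add: hnorm_scale)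
qed

lemma hnorm_diff_triangle: "x \<in> hcarrier H \<Longrightarrow> y \<in> hcarrier H \<Longrightarrow> z \<in> hcarrier H \<Longrightarrow>
   hnorm H (hminus H x z) \<le> hnorm H (hminus H x y) + hnorm H (hminus H y z)"
proof -
  assume "x \<in> hcarrier H" "y \<in> hcarrier H" "z \<in> hcarrier H"
  moreover from this have "hminus H x z = hplus H (hminus H x y) (hminus H y z)" by (intro inner_ext) simp_all
  ultimately show ?thesis using hnorm_triangle[of "hminus H x y" "hminus H y z"] by simp
qed

lemma hnorm_le_diff_add: "x \<in> hcarrier H \<Longrightarrow> y \<in> hcarrier H \<Longrightarrow> hnorm H x \<le> hnorm H (hminus H x y) + hnorm H y"
  using hnorm_diff_triangle[of x y "hzero H"] by (simp add: hminus_def scale_zero_right)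

definition converges :: "(nat \<Rightarrow> 'a) \<Rightarrow> 'a \<Rightarrow> bool" where
  "converges X x \<longleftrightarrow> (\<lambda>n. hnorm H (hminus H (X n) x)) \<longlonglongrightarrow> 0"

lemma converges_unique:
  assumes X: "\<And>n. X n \<in> hcarrier H" and x: "x \<in> hcarrier H" and y: "y \<in> hcarrier H"
    and "converges X x" and "converges X y"
  shows "x = y"
proof -
  have lim: "(\<lambda>n. hnorm H (hminus H (X n) x) + hnorm H (hminus H (X n) y)) \<longlonglongrightarrow> 0"
    using assms(4,5) unfolding converges_def by (rule tendsto_add_zero)
  have "hnorm H (hminus H x y) \<le> hnorm H (hminus H (X n) x) + hnorm H (hminus H (X n) y)" for n
    using hnorm_diff_triangle[OF x X y] hnorm_diff_commute[OF x X] by simp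
  then have "hnorm H (hminus H x y) \<le> 0"
    by (intro LIMSEQ_le_const[OF lim]) blast
  then have "hminus H x y = hzero H" using hnorm_eq_zero_iff[of "hminus H x y"] x y
    by (simp add: order_antisym)
  then show ?thesis by (rule diff_eq_zeroD[OF x y])
qed

lemma hilbert_space_convergent:
  assumes "hilbert_space H" and "\<And>n. X n \<in> hcarrier H"
    and "\<And>\<epsilon>. 0 < \<epsilon> \<Longrightarrow> \<exists>N. \<forall>m\<ge>N. \<forall>n\<ge>N. hnorm H (hminus H (X m) (X n)) < \<epsilon>"
  obtains x where "x \<in> hcarrier H" and "converges X x"
  using assms unfolding hilbert_space_def converges_def by blast

lemma inner_tendsto:
  assumes X: "\<And>n. X n \<in> hcarrier H" and Y: "\<And>n. Y n \<in> hcarrier H"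
    and x: "x \<in> hcarrier H" and y: "y \<in> hcarrier H"
    and "converges X x" and "converges Y y"
  shows "(\<lambda>n. hip H (X n) (Y n)) \<longlonglongrightarrow> hip H x y"
proof -
  define a b where "a n = hnorm H (hminus H (X n) x)" and "b n = hnorm H (hminus H (Y n) y)" for n
  have a: "a \<longlonglongrightarrow> 0" and b: "b \<longlonglongrightarrow> 0"
    using assms(5,6) unfolding converges_def a_def b_def by auto
  define g where "g n = a n * (b n + hnorm H y) + hnorm H x * b n" for n
  have bound: "norm (hip H (X n) (Y n) - hip H x y) \<le> g n" for n
  proof -
    have "hip H (X n) (Y n) - hip H x y = hip H (hminus H (X n) x) (Y n) + hip H x (hminus H (Y n) y)"
      using X Y x y by simp
    then have "norm (hip H (X n) (Y n) - hip H x y)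
        \<le> cmod (hip H (hminus H (X n) x) (Y n)) + cmod (hip H x (hminus H (Y n) y))"
      by (simp add: norm_triangle_ineq)
    also have "\<dots> \<le> a n * hnorm H (Y n) + hnorm H x * b n"
      unfolding a_def b_def using X Y x y by (intro add_mono hnorm_cauchy_schwarz) simp_all
    also have "a n * hnorm H (Y n) \<le> a n * (b n + hnorm H y)"
      unfolding a_def b_def using hnorm_le_diff_add[OF Y y] X x by (intro mult_left_mono) simp_all
    finally show ?thesis unfolding g_def by simp
  qed
  have lim: "g \<longlonglongrightarrow> 0" unfolding g_def
    using tendsto_add[OF tendsto_mult[OF a tendsto_add[OF b tendsto_const]] tendsto_mult[OF tendsto_const b]]
    by simp
  have "(\<lambda>n. norm (hip H (X n) (Y n) - hip H x y)) \<longlonglongrightarrow> 0"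
    by (rule tendsto_sandwich[of "\<lambda>_. 0" _ _ g]) (simp_all add: bound lim always_eventually)
  then show ?thesis by (simp add: tendsto_norm_zero_iff LIM_zero_iff)
qed

lemma bounded_op_closed: "bounded_op H A \<Longrightarrow> x \<in> hcarrier H \<Longrightarrow> A x \<in> hcarrier H"
  and bounded_op_add: "bounded_op H A \<Longrightarrow> x \<in> hcarrier H \<Longrightarrow> y \<in> hcarrier H \<Longrightarrow>
    A (hplus H x y) = hplus H (A x) (A y)"
  and bounded_op_scale: "bounded_op H A \<Longrightarrow> x \<in> hcarrier H \<Longrightarrow> A (hscale H a x) = hscale H a (A x)"
  unfolding bounded_op_def by blast+

lemma bounded_op_zero: "bounded_op H A \<Longrightarrow> A (hzero H) = hzero H"
  using bounded_op_scale[of A "hzero H" 0] bounded_op_closed[of A "hzero H"]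
  by (simp add: scale_zero_left scale_zero_right)

lemma bounded_op_nonneg_bound:
  assumes "bounded_op H A"
  obtains K where "0 \<le> K" and "\<And>x. x \<in> hcarrier H \<Longrightarrow> hnorm H (A x) \<le> K * hnorm H x"
proof -
  obtain K where K: "\<And>x. x \<in> hcarrier H \<Longrightarrow> hnorm H (A x) \<le> K * hnorm H x"
    using assms unfolding bounded_op_def by blast
  have "hnorm H (A x) \<le> \<bar>K\<bar> * hnorm H x" if "x \<in> hcarrier H" for x
    using K[OF that] mult_right_mono[OF abs_ge_self hnorm_nonneg[OF that]] by (rule order_trans)
  then show thesis using that[of "\<bar>K\<bar>"] by simp
qed

lemma bounded_op_comp: "bounded_op H A \<Longrightarrow> bounded_op H B \<Longrightarrow> bounded_op H (A \<circ> B)"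
proof -
  assume A: "bounded_op H A" and B: "bounded_op H B"
  obtain KA where "0 \<le> KA" and KA: "\<And>x. x \<in> hcarrier H \<Longrightarrow> hnorm H (A x) \<le> KA * hnorm H x"
    using bounded_op_nonneg_bound[OF A] by blast
  obtain KB where "0 \<le> KB" and KB: "\<And>x. x \<in> hcarrier H \<Longrightarrow> hnorm H (B x) \<le> KB * hnorm H x"
    using bounded_op_nonneg_bound[OF B] by blast
  have "hnorm H (A (B x)) \<le> (KA * KB) * hnorm H x" if x: "x \<in> hcarrier H" for x
  proof -
    have "hnorm H (A (B x)) \<le> KA * hnorm H (B x)" using KA bounded_op_closed[OF B x] by simp
    also have "\<dots> \<le> KA * (KB * hnorm H x)" using KB[OF x] \<open>0 \<le> KA\<close> by (rule mult_left_mono)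
    finally show ?thesis by (simp add: mult.assoc)
  qed
  then show ?thesis
    using A B unfolding bounded_op_def by (auto simp: bounded_op_closed[OF B])
qed

lemma bounded_op_funpow: "bounded_op H A \<Longrightarrow> bounded_op H (A ^^ n)"
proof (induction n)
  case 0
  show ?case unfolding bounded_op_def by (auto intro!: exI[of _ 1])
qed (simp add: bounded_op_comp)

lemma hnorm_apply_le_opnorm:
  assumes A: "bounded_op H A" and x: "x \<in> hcarrier H"
  shows "hnorm H (A x) \<le> opnorm H A * hnorm H x"
proof -
  obtain K where "0 \<le> K" and K: "\<And>x. x \<in> hcarrier H \<Longrightarrow> hnorm H (A x) \<le> K * hnorm H x"
    using bounded_op_nonneg_bound[OF A] by blast
  have upper: "hnorm H (A y) \<le> opnorm H A" if "y \<in> hcarrier H" "hnorm H y \<le> 1" for y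
    unfolding opnorm_def
  proof (rule cSup_upper)
    show "bdd_above {hnorm H (A x) | x. x \<in> hcarrier H \<and> hnorm H x \<le> 1}"
      using K \<open>0 \<le> K\<close> by (intro bdd_aboveI[of _ K]) (auto intro: order_trans mult_left_le)
  qed (use that in blast)
  show ?thesis
  proof (cases "x = hzero H")
    case True
    then show ?thesis using upper[of "hzero H"] bounded_op_zero[OF A] by simp
  next
    case False
    define r where "r = hnorm H x"
    have r: "0 < r" using False x hnorm_eq_zero_iff hnorm_nonneg unfolding r_def by (metis less_eq_real_def)
    define y where "y = hscale H (complex_of_real (1 / r)) x"
    have "y \<in> hcarrier H" and "hnorm H y = 1"
      unfolding y_def using x r by (simp_all add: hnorm_scale r_def norm_divide)
    moreover have "hnorm H (A y) = hnorm H (A x) / r"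
      unfolding y_def using A x r by (simp add: bounded_op_scale bounded_op_closed hnorm_scale norm_divide)
    ultimately have "hnorm H (A x) / r \<le> opnorm H A" using upper by fastforce
    then show ?thesis using r unfolding r_def by (simp add: pos_divide_le_eq mult.commute)
  qed
qed

lemma adjoint_eqI:
  assumes B: "\<And>y. y \<in> hcarrier H \<Longrightarrow> B y \<in> hcarrier H"
    and adj: "\<And>x y. x \<in> hcarrier H \<Longrightarrow> y \<in> hcarrier H \<Longrightarrow> hip H (A x) y = hip H x (B y)"
    and y: "y \<in> hcarrier H"
  shows "adjoint H A y = B y"
proof -
  let ?P = "\<lambda>B. (\<forall>y\<in>hcarrier H. B y \<in> hcarrier H) \<and>
      (\<forall>x\<in>hcarrier H. \<forall>y\<in>hcarrier H. hip H (A x) y = hip H x (B y))"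
  have P: "?P (adjoint H A)" unfolding adjoint_def by (rule someI[of ?P B]) (use B adj in blast)
  then have Ay: "adjoint H A y \<in> hcarrier H" using y by blast
  show ?thesis
  proof (rule inner_ext[OF Ay B[OF y]])
    fix z assume z: "z \<in> hcarrier H"
    have "hip H (adjoint H A y) z = cnj (hip H z (adjoint H A y))" by (rule inner_cnj[OF z Ay])
    also have "\<dots> = cnj (hip H z (B y))" using P adj[OF z y] z y by simp
    also have "\<dots> = hip H (B y) z" by (rule inner_cnj[OF z B[OF y], symmetric])
    finally show "hip H (adjoint H A y) z = hip H (B y) z" .
  qed
qed

end

locale isometry = H: ip_space H + K: ip_space K
  for H :: "'a chs" and K :: "'b chs" +
  fixes U :: "'a \<Rightarrow> 'b"
  assumes closed[simp]: "\<And>x. x \<in> hcarrier H \<Longrightarrow> U x \<in> hcarrier K"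
    and add: "\<And>x y. x \<in> hcarrier H \<Longrightarrow> y \<in> hcarrier H \<Longrightarrow> U (hplus H x y) = hplus K (U x) (U y)"
    and scale: "\<And>x. x \<in> hcarrier H \<Longrightarrow> U (hscale H a x) = hscale K a (U x)"
    and inner: "\<And>x y. x \<in> hcarrier H \<Longrightarrow> y \<in> hcarrier H \<Longrightarrow> hip K (U x) (U y) = hip H x y"
begin

lemma diff: "x \<in> hcarrier H \<Longrightarrow> y \<in> hcarrier H \<Longrightarrow> U (hminus H x y) = hminus K (U x) (U y)"
  unfolding hminus_def by (simp add: add scale)

lemma hnorm_diff: "x \<in> hcarrier H \<Longrightarrow> y \<in> hcarrier H \<Longrightarrow>
    hnorm K (hminus K (U x) (U y)) = hnorm H (hminus H x y)"
  unfolding hnorm_def by (simp add: diff[symmetric] inner)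

lemma zero: "U (hzero H) = hzero K"
  using scale[of "hzero H" 0] by (simp add: H.scale_zero_right K.scale_zero_left)

lemma inj: "inj_on U (hcarrier H)"
proof (rule inj_onI)
  fix x y assume x: "x \<in> hcarrier H" and y: "y \<in> hcarrier H" and "U x = U y"
  then have "hnorm H (hminus H x y) = 0"
    using hnorm_diff[OF x y] K.hnorm_eq_zero_iff[of "hminus K (U y) (U y)"]
    by (simp add: hminus_def K.add_neg)
  then show "x = y" using H.hnorm_eq_zero_iff x y by (simp add: H.diff_eq_zeroD)
qed

lemma image_limit_closed:
  assumes "hilbert_space H" and X: "\<And>n. X n \<in> U ` hcarrier H" and f: "f \<in> hcarrier K"
    and lim: "K.converges X f"
  shows "f \<in> U ` hcarrier H"
proof -
  have "\<forall>n. \<exists>x. x \<in> hcarrier H \<and> X n = U x" using X by blast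
  then obtain xs where xs: "\<And>n. xs n \<in> hcarrier H" and X_eq: "\<And>n. X n = U (xs n)"
    by metis
  have Cauchy: "\<exists>N. \<forall>m\<ge>N. \<forall>n\<ge>N. hnorm H (hminus H (xs m) (xs n)) < \<epsilon>" if "0 < \<epsilon>" for \<epsilon>
  proof -
    obtain N where N: "\<And>n. n \<ge> N \<Longrightarrow> hnorm K (hminus K (X n) f) < \<epsilon> / 2"
      using lim \<open>0 < \<epsilon>\<close> unfolding K.converges_def
      by (metis (no_types, lifting) LIMSEQ_D diff_zero half_gt_zero real_norm_def abs_less_iff)
    have "hnorm H (hminus H (xs m) (xs n)) < \<epsilon>" if "N \<le> m" "N \<le> n" for m n
      using K.hnorm_diff_triangle[of "X m" f "X n"] K.hnorm_diff_commute[of f "X n"] N[OF that(1)] N[OF that(2)]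
        hnorm_diff[OF xs xs] xs f
      by (simp add: X_eq)
    then show ?thesis by blast
  qed
  obtain x where x: "x \<in> hcarrier H" and "H.converges xs x"
    using H.hilbert_space_convergent[where X = xs, OF \<open>hilbert_space H\<close> xs Cauchy] by blast
  then have "K.converges X (U x)" unfolding K.converges_def H.converges_def using xs x
    by (simp add: X_eq hnorm_diff)
  with lim have "U x = f" using X_eq xs x f by (intro K.converges_unique) simp_all
  with x show ?thesis by blast
qed

lemma closed_subspace_image:
  assumes "hilbert_space H"
  shows "closed_subspace K (U ` hcarrier H)"
  unfolding closed_subspace_def
proof (intro conjI allI ballI impI)
  show "U ` hcarrier H \<subseteq> hcarrier K" by auto
  show "hzero K \<in> U ` hcarrier H" using zero H.zero_closed by (metis image_eqI)
next
  fix u v assume "u \<in> U ` hcarrier H" "v \<in> U ` hcarrier H"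
  then show "hplus K u v \<in> U ` hcarrier H" by (auto simp: add[symmetric])
next
  fix a u assume "u \<in> U ` hcarrier H"
  then show "hscale K a u \<in> U ` hcarrier H" by (auto simp: scale[symmetric])
next
  fix X f assume "(\<forall>n. X n \<in> U ` hcarrier H) \<and> f \<in> hcarrier K \<and>
      (\<lambda>n. hnorm K (hminus K (X n) f)) \<longlonglongrightarrow> 0"
  then show "f \<in> U ` hcarrier H"
    using image_limit_closed[OF assms] unfolding K.converges_def by blast
qed

end

context psd_form
begin

lemma form_null_add: "a \<in> hcarrier H \<Longrightarrow> b \<in> hcarrier H \<Longrightarrow> Re (F a a) = 0 \<Longrightarrow> Re (F b b) = 0 \<Longrightarrow>
   Re (F (hplus H a b) (hplus H a b)) = 0"
  using form_null_left[of a b] form_null_left[of b a] form_null_left[of a a] form_null_left[of b b] by simp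

lemma form_null_scale: "a \<in> hcarrier H \<Longrightarrow> Re (F a a) = 0 \<Longrightarrow> Re (F (hscale H c a) (hscale H c a)) = 0"
  using form_null_left[of a "hscale H c a"] by simp

lemma form_add_null: "a \<in> hcarrier H \<Longrightarrow> n \<in> hcarrier H \<Longrightarrow> Re (F n n) = 0 \<Longrightarrow>
   F (hplus H a n) (hplus H a n) = F a a"
  using form_null_left[of n a] form_null_right[of n a] form_null_left[of n n] by simp

lemma form_hsum_orthogonal:
  assumes g: "\<And>j. g j \<in> hcarrier H" and orth: "\<And>i j. i \<noteq> j \<Longrightarrow> F (g i) (g j) = 0"
  shows "F (hsum H (\<lambda>j. hscale H (a j) (g j)) n) (hsum H (\<lambda>j. hscale H (b j) (g j)) n)
         = (\<Sum>j<n. a j * cnj (b j) * F (g j) (g j))"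
proof (induction n)
  case (Suc n)
  define S T where "S = hsum H (\<lambda>j. hscale H (a j) (g j)) n" and "T = hsum H (\<lambda>j. hscale H (b j) (g j)) n"
  have S: "S \<in> hcarrier H" and T: "T \<in> hcarrier H" unfolding S_def T_def using g by simp_all
  have "F S (g n) = 0" and "F (g n) T = 0"
    unfolding S_def T_def using g orth by (simp_all add: form_hsum_left form_hsum_right)
  then have "F (hplus H S (hscale H (a n) (g n))) (hplus H T (hscale H (b n) (g n)))
      = F S T + a n * cnj (b n) * F (g n) (g n)"
    using S T g by (simp add: algebra_simps)
  with Suc.IH show ?case unfolding S_def T_def by simp
qed simp

end

section \<open>Gram-Schmidt orthogonalization for semi-inner products\<close>

text \<open>Vectors of \<open>F\<close>-length zero are normalized to zero, so the process runs unchanged for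
  degenerate forms and then produces some zero vectors.\<close>

definition form_normalize :: "'a chs \<Rightarrow> ('a \<Rightarrow> 'a \<Rightarrow> complex) \<Rightarrow> 'a \<Rightarrow> 'a" where
  "form_normalize H F u =
     (if 0 < Re (F u u) then hscale H (complex_of_real (1 / sqrt (Re (F u u)))) u else hzero H)"

definition form_proj :: "'a chs \<Rightarrow> ('a \<Rightarrow> 'a \<Rightarrow> complex) \<Rightarrow> (nat \<Rightarrow> 'a) \<Rightarrow> nat \<Rightarrow> 'a \<Rightarrow> 'a" where
  "form_proj H F w K x = hsum H (\<lambda>j. hscale H (F x (w j)) (w j)) K"

primrec gram_schmidt_upto :: "'a chs \<Rightarrow> ('a \<Rightarrow> 'a \<Rightarrow> complex) \<Rightarrow> (nat \<Rightarrow> 'a) \<Rightarrow> nat \<Rightarrow> nat \<Rightarrow> 'a" where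
  "gram_schmidt_upto H F v 0 = (\<lambda>_. hzero H)"
| "gram_schmidt_upto H F v (Suc k) = (gram_schmidt_upto H F v k)
     (k := form_normalize H F (hminus H (v k) (form_proj H F (gram_schmidt_upto H F v k) k (v k))))"

definition gram_schmidt :: "'a chs \<Rightarrow> ('a \<Rightarrow> 'a \<Rightarrow> complex) \<Rightarrow> (nat \<Rightarrow> 'a) \<Rightarrow> nat \<Rightarrow> 'a" where
  "gram_schmidt H F v k = gram_schmidt_upto H F v (Suc k) k"

lemma gram_schmidt_upto_eq: "j < n \<Longrightarrow> gram_schmidt_upto H F v n j = gram_schmidt H F v j"
  by (induction n) (auto simp: gram_schmidt_def less_Suc_eq)

lemma gram_schmidt_eq:
  "gram_schmidt H F v k = form_normalize H F (hminus H (v k) (form_proj H F (gram_schmidt H F v) k (v k)))"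
proof -
  have "form_proj H F (gram_schmidt_upto H F v k) k (v k) = form_proj H F (gram_schmidt H F v) k (v k)"
    unfolding form_proj_def by (rule hsum_cong) (simp add: gram_schmidt_upto_eq)
  then show ?thesis by (simp add: gram_schmidt_def)
qed

context psd_form
begin

lemma form_normalize_closed[simp]: "u \<in> hcarrier H \<Longrightarrow> form_normalize H F u \<in> hcarrier H"
  unfolding form_normalize_def by simp

lemma form_normalize_normal:
  assumes u: "u \<in> hcarrier H" and pos: "0 < Re (F u u)"
  shows "F (form_normalize H F u) (form_normalize H F u) = 1"
proof -
  define r where "r = Re (F u u)"
  have "F (form_normalize H F u) (form_normalize H F u)
      = complex_of_real (1 / sqrt r) * complex_of_real (1 / sqrt r) * F u u"
    using u pos unfolding form_normalize_def r_def by (simp add: mult.assoc)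
  also have "F u u = complex_of_real r" using form_self_real[OF u] r_def by simp
  also have "complex_of_real (1 / sqrt r) * complex_of_real (1 / sqrt r) * complex_of_real r
      = complex_of_real (1 / sqrt r * (1 / sqrt r) * r)" by (simp only: of_real_mult)
  also have "1 / sqrt r * (1 / sqrt r) * r = 1"
    using pos unfolding r_def by (simp add: field_simps)
  finally show ?thesis by simp
qed

lemma form_proj_closed[simp]: "(\<And>j. j < K \<Longrightarrow> w j \<in> hcarrier H) \<Longrightarrow> form_proj H G w K x \<in> hcarrier H"
  unfolding form_proj_def by (rule hsum_closed) simp

lemma form_proj_left: "(\<And>j. j < K \<Longrightarrow> w j \<in> hcarrier H) \<Longrightarrow> x \<in> hcarrier H \<Longrightarrow> z \<in> hcarrier H \<Longrightarrow>
   F (form_proj H F w K x) z = (\<Sum>j<K. F x (w j) * F (w j) z)"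
  unfolding form_proj_def by (subst form_hsum_left) auto

lemma form_proj_right: "(\<And>j. j < K \<Longrightarrow> w j \<in> hcarrier H) \<Longrightarrow> x \<in> hcarrier H \<Longrightarrow> z \<in> hcarrier H \<Longrightarrow>
   F z (form_proj H F w K x) = (\<Sum>j<K. cnj (F x (w j)) * F z (w j))"
  unfolding form_proj_def by (subst form_hsum_right) auto

end

locale gram_schmidt_process = psd_form +
  fixes v :: "nat \<Rightarrow> 'a"
  assumes v_closed[simp]: "\<And>k. v k \<in> hcarrier H"
begin

abbreviation "e \<equiv> gram_schmidt H F v"
abbreviation "P \<equiv> form_proj H F (gram_schmidt H F v)"

lemma e_closed[simp]: "e k \<in> hcarrier H"
proof (induction k rule: less_induct)
  case (less k)
  then show ?case by (subst gram_schmidt_eq) simp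
qed

lemma P_closed[simp]: "P K x \<in> hcarrier H"
  by (rule form_proj_closed) simp

lemma e_normal_or_zero: "e k = hzero H \<or> F (e k) (e k) = 1"
  using form_normalize_normal[of "hminus H (v k) (P k (v k))"]
  by (subst (1 2 3) gram_schmidt_eq) (auto simp: form_normalize_def)

lemma form_e_normal: "x \<in> hcarrier H \<Longrightarrow> F x (e j) * F (e j) (e j) = F x (e j)"
  using e_normal_or_zero[of j] by auto

lemma sum_form_single:
  assumes "j < K" and "\<And>l. l < K \<Longrightarrow> l \<noteq> j \<Longrightarrow> F (e l) (e j) = 0"
  shows "(\<Sum>l<K. c l * F (e l) (e j)) = c j * F (e j) (e j)"
proof -
  have "(\<Sum>l<K. c l * F (e l) (e j)) = c j * F (e j) (e j) + (\<Sum>l\<in>{..<K} - {j}. c l * F (e l) (e j))"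
    using assms(1) by (subst sum.remove[of _ j]) auto
  also have "(\<Sum>l\<in>{..<K} - {j}. c l * F (e l) (e j)) = 0"
    using assms(2) by (intro sum.neutral) auto
  finally show ?thesis by simp
qed

lemma e_orthogonal_lt: "j < i \<Longrightarrow> F (e i) (e j) = 0"
proof (induction i arbitrary: j rule: less_induct)
  case (less i)
  have orth: "F (e l) (e j) = 0" if "l < i" "l \<noteq> j" for l
  proof (cases "j < l")
    case False
    with that have "F (e j) (e l) = 0" using less by simp
    then show ?thesis using form_cnj[of "e j" "e l"] by simp
  qed (use less.IH that in blast)
  define u where "u = hminus H (v i) (P i (v i))"
  have "F u (e j) = 0"
    unfolding u_def using sum_form_single[OF less.prems orth, of "\<lambda>l. F (v i) (e l)"] form_e_normal[of "v i" j]
    by (simp add: form_proj_left)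
  moreover have "e i = form_normalize H F u" unfolding u_def by (rule gram_schmidt_eq)
  ultimately show ?case unfolding form_normalize_def u_def by simp
qed

lemma e_orthogonal: "i \<noteq> j \<Longrightarrow> F (e i) (e j) = 0"
  using e_orthogonal_lt[of j i] e_orthogonal_lt[of i j] form_cnj[of "e j" "e i"]
  by (cases "j < i") simp_all

lemma residual_orthogonal: "x \<in> hcarrier H \<Longrightarrow> j < K \<Longrightarrow> F (hminus H x (P K x)) (e j) = 0"
  using sum_form_single[of j K "\<lambda>l. F x (e l)"] form_e_normal[of x j] e_orthogonal
  by (simp add: form_proj_left)

lemma residual_orthogonal_proj:
  assumes x: "x \<in> hcarrier H" and y: "y \<in> hcarrier H"
  shows "F (hminus H x (P K x)) (P K y) = 0"
proof -
  have "F (hminus H x (P K x)) (P K y) = (\<Sum>j<K. cnj (F y (e j)) * F (hminus H x (P K x)) (e j))"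
    by (rule form_proj_right) (simp_all add: x y)
  also have "\<dots> = 0" by (rule sum.neutral) (simp add: residual_orthogonal[OF x])
  finally show ?thesis .
qed

lemma residual_form: "x \<in> hcarrier H \<Longrightarrow> y \<in> hcarrier H \<Longrightarrow>
  F (hminus H x (P K x)) (hminus H y (P K y)) = F x y - (\<Sum>j<K. F x (e j) * cnj (F y (e j)))"
proof -
  assume x: "x \<in> hcarrier H" and y: "y \<in> hcarrier H"
  have "F (hminus H x (P K x)) (hminus H y (P K y)) = F (hminus H x (P K x)) y"
    using residual_orthogonal_proj[OF x y] x y by simp
  also have "\<dots> = F x y - (\<Sum>j<K. F x (e j) * cnj (F y (e j)))"
    using x y form_cnj[of y "e _"] by (simp add: form_proj_left)
  finally show ?thesis .
qed

lemma residual_norm: "x \<in> hcarrier H \<Longrightarrow>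
  Re (F (hminus H x (P K x)) (hminus H x (P K x))) = Re (F x x) - (\<Sum>j<K. (cmod (F x (e j)))\<^sup>2)"
proof -
  assume x: "x \<in> hcarrier H"
  have "(\<Sum>j<K. F x (e j) * cnj (F x (e j))) = complex_of_real (\<Sum>j<K. (cmod (F x (e j)))\<^sup>2)"
    by (simp only: complex_norm_square of_real_sum)
  then show ?thesis using residual_form[OF x x, of K] by simp
qed

lemma residual_null_Suc: "Re (F (hminus H (v k) (P (Suc k) (v k))) (hminus H (v k) (P (Suc k) (v k)))) = 0"
proof -
  define u where "u = hminus H (v k) (P k (v k))"
  have u: "u \<in> hcarrier H" unfolding u_def by simp
  have "Re (F (hminus H (v k) (P (Suc k) (v k))) (hminus H (v k) (P (Suc k) (v k))))
      = Re (F u u) - (cmod (F (v k) (e k)))\<^sup>2"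
    unfolding u_def residual_norm[OF v_closed] by simp
  also have "(cmod (F (v k) (e k)))\<^sup>2 = Re (F u u)"
  proof (cases "0 < Re (F u u)")
    case True
    define r where "r = Re (F u u)"
    have r: "0 < r" using True r_def by simp
    have ek: "e k = hscale H (complex_of_real (1 / sqrt r)) u"
      using gram_schmidt_eq[of H F v k] True unfolding u_def[symmetric] r_def form_normalize_def by simp
    have "F (P k (v k)) (e k) = 0" by (simp add: form_proj_left e_orthogonal)
    then have "F (v k) (e k) = F u (e k)" unfolding u_def by simp
    also have "\<dots> = complex_of_real (1 / sqrt r * r)"
      using u ek form_self_real[OF u] unfolding r_def by simp
    finally have "cmod (F (v k) (e k)) = sqrt r" using r by (simp add: real_div_sqrt)
    then show ?thesis using r r_def by simp
  next
    case False
    then have "Re (F u u) = 0" using form_self_nonneg[OF u] by simp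
    moreover have "e k = hzero H"
      using gram_schmidt_eq[of H F v k] False unfolding u_def[symmetric] form_normalize_def by simp
    ultimately show ?thesis by simp
  qed
  finally show ?thesis by simp
qed

lemma residual_null: "k < K \<Longrightarrow> Re (F (hminus H (v k) (P K (v k))) (hminus H (v k) (P K (v k)))) = 0"
proof -
  assume "k < K"
  then have "(\<Sum>j<Suc k. (cmod (F (v k) (e j)))\<^sup>2) \<le> (\<Sum>j<K. (cmod (F (v k) (e j)))\<^sup>2)"
    by (intro sum_mono2) auto
  then have "Re (F (hminus H (v k) (P K (v k))) (hminus H (v k) (P K (v k)))) \<le>
      Re (F (hminus H (v k) (P (Suc k) (v k))) (hminus H (v k) (P (Suc k) (v k))))"
    unfolding residual_norm[OF v_closed] by simp
  then show ?thesis using residual_null_Suc[of k] form_self_nonneg[of "hminus H (v k) (P K (v k))"] by simp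
qed

lemma residual_hsum_null:
  fixes c :: "nat \<Rightarrow> complex"
  assumes "m \<le> K"
  defines "s \<equiv> hsum H (\<lambda>j. hscale H (c j) (v j)) m"
  shows "Re (F (hminus H s (P K s)) (hminus H s (P K s))) = 0"
  using assms(1) unfolding s_def
proof (induction m)
  case 0
  have "P K (hzero H) = hzero H" by (rule inner_ext) (simp_all add: form_proj_def inner.form_hsum_left)
  then show ?case by simp
next
  case (Suc m)
  define g where "g = hsum H (\<lambda>j. hscale H (c j) (v j)) m"
  have g: "g \<in> hcarrier H" unfolding g_def by simp
  have "hminus H (hplus H g (hscale H (c m) (v m))) (P K (hplus H g (hscale H (c m) (v m))))
      = hplus H (hminus H g (P K g)) (hscale H (c m) (hminus H (v m) (P K (v m))))"
    using g by (intro inner_ext)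
      (simp_all add: form_proj_def inner.form_hsum_left algebra_simps sum.distrib sum_subtractf sum_distrib_left)
  moreover have "Re (F (hminus H g (P K g)) (hminus H g (P K g))) = 0" using Suc g_def by simp
  moreover have "Re (F (hminus H (v m) (P K (v m))) (hminus H (v m) (P K (v m)))) = 0"
    using residual_null Suc by simp
  ultimately show ?case unfolding hsum.simps g_def[symmetric] using g
    by (metis diff_closed form_null_add form_null_scale P_closed scale_closed v_closed)
qed

lemma residual_minimal:
  assumes x: "x \<in> hcarrier H" and y: "y \<in> hcarrier H"
  shows "Re (F (hminus H x (P K x)) (hminus H x (P K x))) \<le> Re (F (hminus H x (P K y)) (hminus H x (P K y)))"
proof -
  define a b where "a = hminus H x (P K x)" and "b = P K (hminus H x y)"
  have a: "a \<in> hcarrier H" and b: "b \<in> hcarrier H" unfolding a_def b_def using x y by simp_all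
  have "hminus H x (P K y) = hplus H a b"
    unfolding a_def b_def using x y
    by (intro inner_ext) (simp_all add: form_proj_def inner.form_hsum_left algebra_simps sum.distrib sum_subtractf)
  moreover have "F a b = 0" unfolding a_def b_def using x y by (intro residual_orthogonal_proj) simp_all
  moreover from this have "F b a = 0" using form_cnj[OF a b] by simp
  ultimately show ?thesis using a b form_self_nonneg[OF b] unfolding a_def[symmetric] by simp
qed

lemma residual_tendsto_zero:
  assumes x: "x \<in> hcarrier H"
    and approx: "\<And>\<epsilon>. \<epsilon> > 0 \<Longrightarrow> \<exists>m c. Re (F (hminus H x (hsum H (\<lambda>j. hscale H (c j) (v j)) m))
                                   (hminus H x (hsum H (\<lambda>j. hscale H (c j) (v j)) m))) < \<epsilon>"
  shows "(\<lambda>K. Re (F (hminus H x (P K x)) (hminus H x (P K x)))) \<longlonglongrightarrow> 0"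
proof (rule LIMSEQ_I)
  fix \<epsilon> :: real assume "0 < \<epsilon>"
  then obtain m c where mc: "Re (F (hminus H x (hsum H (\<lambda>j. hscale H (c j) (v j)) m))
                                   (hminus H x (hsum H (\<lambda>j. hscale H (c j) (v j)) m))) < \<epsilon>"
    using approx by blast
  define s where "s = hsum H (\<lambda>j. hscale H (c j) (v j)) m"
  have s: "s \<in> hcarrier H" unfolding s_def by simp
  have "Re (F (hminus H x (P K x)) (hminus H x (P K x))) < \<epsilon>" if "m \<le> K" for K
  proof -
    have "hminus H x (P K s) = hplus H (hminus H x s) (hminus H s (P K s))"
      using x s by (intro inner_ext) simp_all
    moreover have "Re (F (hminus H s (P K s)) (hminus H s (P K s))) = 0"
      unfolding s_def by (rule residual_hsum_null[OF that])
    ultimately have "Re (F (hminus H x (P K s)) (hminus H x (P K s))) = Re (F (hminus H x s) (hminus H x s))"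
      using x s by (simp only: form_add_null diff_closed P_closed)
    then show ?thesis using residual_minimal[OF x s, of K] mc unfolding s_def by simp
  qed
  then show "\<exists>K0. \<forall>K\<ge>K0. norm (Re (F (hminus H x (P K x)) (hminus H x (P K x))) - 0) < \<epsilon>"
    using form_self_nonneg[of "hminus H x (P _ x)"] x by auto
qed

end

section \<open>Factorization of a bounded positive form\<close>

locale psd_form_factorization = psd_form +
  fixes C :: real and d :: "nat \<Rightarrow> 'a"
  assumes hilbert: "hilbert_space H"
    and form_bounded: "\<And>x. x \<in> hcarrier H \<Longrightarrow> Re (F x x) \<le> C * (hnorm H x)\<^sup>2"
    and d_closed[simp]: "\<And>k. d k \<in> hcarrier H"
    and d_dense: "\<And>x \<epsilon>. x \<in> hcarrier H \<Longrightarrow> 0 < \<epsilon> \<Longrightarrow> \<exists>k. hnorm H (hminus H x (d k)) < \<epsilon>"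
begin

text \<open>\<open>e\<close> is an orthonormal system of \<open>H\<close> (with some zero vectors) spanning a dense subspace,
  \<open>w\<close> an \<open>F\<close>-orthonormal system obtained from it. The factor of \<open>F\<close> is
  \<open>x \<mapsto> \<Sum>\<^sub>j F x (w j) \<cdot> e j\<close>; since \<open>w j\<close> lies in the span of \<open>e 0, \<dots>, e j\<close>,
  \<open>w j\<close> vanishes whenever \<open>e j\<close> does, so no coefficient is lost.\<close>

sublocale inner_gs: gram_schmidt_process H "hip H" d
  by unfold_locales simp

abbreviation "e \<equiv> gram_schmidt H (hip H) d"

sublocale form_gs: gram_schmidt_process H F e
  by unfold_locales simp

abbreviation "w \<equiv> gram_schmidt H F e"

lemma d_expansion: "d k = hsum H (\<lambda>j. hscale H (hip H (d k) (e j)) (e j)) (Suc k)"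
proof -
  define r where "r = hminus H (d k) (form_proj H (hip H) e (Suc k) (d k))"
  have r: "r \<in> hcarrier H" unfolding r_def by simp
  have "Re (hip H r r) = 0" unfolding r_def by (rule inner_gs.residual_null) simp
  then have "hip H r r = 0" using inner_self_nonneg[OF r] by (simp add: complex_eq_iff)
  then have "r = hzero H" using inner_self_eq_zeroD[OF r] by simp
  then have "d k = form_proj H (hip H) e (Suc k) (d k)"
    unfolding r_def by (rule diff_eq_zeroD[rotated 2]) simp_all
  then show ?thesis unfolding form_proj_def .
qed

lemma form_approx:
  assumes x: "x \<in> hcarrier H" and "0 < \<epsilon>"
  shows "\<exists>m c. Re (F (hminus H x (hsum H (\<lambda>j. hscale H (c j) (e j)) m))
                    (hminus H x (hsum H (\<lambda>j. hscale H (c j) (e j)) m))) < \<epsilon>"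
proof -
  have "0 < sqrt (\<epsilon> / (\<bar>C\<bar> + 1))" using \<open>0 < \<epsilon>\<close> by simp
  then obtain k where k: "hnorm H (hminus H x (d k)) < sqrt (\<epsilon> / (\<bar>C\<bar> + 1))"
    using d_dense[OF x] by blast
  define r where "r = hminus H x (d k)"
  have r: "r \<in> hcarrier H" unfolding r_def using x by simp
  have "Re (F r r) \<le> (\<bar>C\<bar> + 1) * (hnorm H r)\<^sup>2"
    using form_bounded[OF r] mult_right_mono[of C "\<bar>C\<bar> + 1" "(hnorm H r)\<^sup>2"] by fastforce
  also have "\<dots> < (\<bar>C\<bar> + 1) * (sqrt (\<epsilon> / (\<bar>C\<bar> + 1)))\<^sup>2"
    using k r unfolding r_def by (intro mult_strict_left_mono power_strict_mono) simp_all
  also have "\<dots> = \<epsilon>" using \<open>0 < \<epsilon>\<close> by simp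
  finally show ?thesis unfolding r_def
    by (subst (asm) (1 2) d_expansion) (rule exI[of _ "Suc k"], rule exI[of _ "\<lambda>j. hip H (d k) (e j)"])
qed

lemma form_residual_tendsto_zero: "x \<in> hcarrier H \<Longrightarrow>
   (\<lambda>K. Re (F (hminus H x (form_proj H F w K x)) (hminus H x (form_proj H F w K x)))) \<longlonglongrightarrow> 0"
  by (rule form_gs.residual_tendsto_zero) (use form_approx in auto)

lemma w_zero_if_e_zero: "e j = hzero H \<Longrightarrow> w j = hzero H"
proof -
  assume "e j = hzero H"
  define u where "u = hminus H (e j) (form_proj H F w j (e j))"
  have "Re (F u u) = Re (F (e j) (e j)) - (\<Sum>i<j. (cmod (F (e j) (w i)))\<^sup>2)"
    unfolding u_def by (rule form_gs.residual_norm) simp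
  with \<open>e j = hzero H\<close> have "Re (F u u) = 0" by simp
  then show ?thesis unfolding gram_schmidt_eq[of H F e j] u_def[symmetric] form_normalize_def by simp
qed

lemma form_w_inner_e: "x \<in> hcarrier H \<Longrightarrow> F x (w j) * hip H (e j) (e j) = F x (w j)"
  using inner_gs.e_normal_or_zero[of j] w_zero_if_e_zero[of j] by auto

definition partial_factor :: "'a \<Rightarrow> nat \<Rightarrow> 'a" where
  "partial_factor x n = hsum H (\<lambda>j. hscale H (F x (w j)) (e j)) n"

lemma partial_factor_closed[simp]: "partial_factor x n \<in> hcarrier H"
  unfolding partial_factor_def by simp

lemma inner_partial_factor: "x \<in> hcarrier H \<Longrightarrow> y \<in> hcarrier H \<Longrightarrow>
  hip H (partial_factor x n) (partial_factor y n) = (\<Sum>j<n. F x (w j) * cnj (F y (w j)))"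
proof -
  assume x: "x \<in> hcarrier H" and y: "y \<in> hcarrier H"
  have "hip H (partial_factor x n) (partial_factor y n) = (\<Sum>j<n. F x (w j) * cnj (F y (w j)) * hip H (e j) (e j))"
    unfolding partial_factor_def by (rule inner.form_hsum_orthogonal) (simp_all add: inner_gs.e_orthogonal)
  also have "\<dots> = (\<Sum>j<n. F x (w j) * cnj (F y (w j)))"
  proof (intro sum.cong refl)
    fix j
    show "F x (w j) * cnj (F y (w j)) * hip H (e j) (e j) = F x (w j) * cnj (F y (w j))"
    proof -
      have "F x (w j) * cnj (F y (w j)) * hip H (e j) (e j)
          = (F x (w j) * hip H (e j) (e j)) * cnj (F y (w j))" by (simp only: ac_simps)
      then show ?thesis by (simp only: form_w_inner_e[OF x])
    qed
  qed
  finally show ?thesis .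
qed

lemma inner_partial_factor_tendsto:
  assumes x: "x \<in> hcarrier H" and y: "y \<in> hcarrier H"
  shows "(\<lambda>n. hip H (partial_factor x n) (partial_factor y n)) \<longlonglongrightarrow> F x y"
proof -
  define r where "r x n = hminus H x (form_proj H F w n x)" for x n
  define a where "a x n = Re (F (r x n) (r x n))" for x n
  have eq: "hip H (partial_factor x n) (partial_factor y n) - F x y = - F (r x n) (r y n)" for n
    unfolding inner_partial_factor[OF x y] r_def using form_gs.residual_form[OF x y, of n] by simp
  have bound: "norm (hip H (partial_factor x n) (partial_factor y n) - F x y) \<le> sqrt (a x n) * sqrt (a y n)" for n
    unfolding eq norm_minus_cancel a_def by (rule form_cauchy_schwarz) (simp_all add: r_def x y)
  have "(\<lambda>n. sqrt (a x n) * sqrt (a y n)) \<longlonglongrightarrow> sqrt 0 * sqrt 0"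
    unfolding a_def r_def
    by (intro tendsto_mult tendsto_real_sqrt form_residual_tendsto_zero x y)
  then have lim: "(\<lambda>n. sqrt (a x n) * sqrt (a y n)) \<longlonglongrightarrow> 0" by simp
  have "(\<lambda>n. norm (hip H (partial_factor x n) (partial_factor y n) - F x y)) \<longlonglongrightarrow> 0"
    by (rule tendsto_sandwich[of "\<lambda>_. 0" _ _ "\<lambda>n. sqrt (a x n) * sqrt (a y n)"])
      (simp_all add: bound lim always_eventually)
  then show ?thesis by (simp add: tendsto_norm_zero_iff LIM_zero_iff)
qed

lemma hnorm_partial_factor_diff:
  assumes x: "x \<in> hcarrier H" and "m \<le> n"
  shows "(hnorm H (hminus H (partial_factor x n) (partial_factor x m)))\<^sup>2
    = (\<Sum>j\<in>{m..<n}. (cmod (F x (w j)))\<^sup>2)"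
proof -
  have filter: "(\<Sum>j<n. if m \<le> j then t j else 0) = sum t {m..<n}" for t :: "nat \<Rightarrow> 'b::comm_monoid_add"
    by (simp add: sum.inter_filter[symmetric]) (rule sum.cong; auto)
  define c where "c j = (if m \<le> j then F x (w j) else 0)" for j
  have "hminus H (partial_factor x n) (partial_factor x m) = hsum H (\<lambda>j. hscale H (c j) (e j)) n"
  proof (rule inner_ext)
    fix z assume z: "z \<in> hcarrier H"
    have "(\<Sum>j<n. c j * hip H (e j) z) = (\<Sum>j\<in>{m..<n}. F x (w j) * hip H (e j) z)"
      unfolding c_def filter[symmetric] by (intro sum.cong) simp_all
    also have "\<dots> = (\<Sum>j<n. F x (w j) * hip H (e j) z) - (\<Sum>j<m. F x (w j) * hip H (e j) z)"
      using sum_diff_nat_ivl[of 0 m n "\<lambda>j. F x (w j) * hip H (e j) z"] \<open>m \<le> n\<close>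
      by (simp add: atLeast0LessThan)
    finally show "hip H (hminus H (partial_factor x n) (partial_factor x m)) z
        = hip H (hsum H (\<lambda>j. hscale H (c j) (e j)) n) z"
      unfolding partial_factor_def using z by (simp add: inner.form_hsum_left)
  qed simp_all
  moreover have "hip H (hsum H (\<lambda>j. hscale H (c j) (e j)) n) (hsum H (\<lambda>j. hscale H (c j) (e j)) n)
      = (\<Sum>j<n. c j * cnj (c j) * hip H (e j) (e j))"
    by (rule inner.form_hsum_orthogonal) (simp_all add: inner_gs.e_orthogonal)
  moreover have "c j * cnj (c j) * hip H (e j) (e j) = complex_of_real (if m \<le> j then (cmod (F x (w j)))\<^sup>2 else 0)"
    for j
  proof -
    have "c j * cnj (c j) * hip H (e j) (e j) = (c j * hip H (e j) (e j)) * cnj (c j)" by (simp only: ac_simps)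
    also have "c j * hip H (e j) (e j) = c j" unfolding c_def using form_w_inner_e[OF x, of j] by simp
    finally show ?thesis unfolding c_def by (cases "m \<le> j") (simp_all add: complex_norm_square[symmetric])
  qed
  ultimately show ?thesis
    by (simp add: hnorm_sq filter flip: of_real_sum)
qed

lemma partial_factor_Cauchy:
  assumes x: "x \<in> hcarrier H" and "0 < \<epsilon>"
  shows "\<exists>N. \<forall>m\<ge>N. \<forall>n\<ge>N. hnorm H (hminus H (partial_factor x m) (partial_factor x n)) < \<epsilon>"
proof -
  have "summable (\<lambda>j. (cmod (F x (w j)))\<^sup>2)"
  proof (rule summableI_nonneg_bounded)
    show "(\<Sum>j<n. (cmod (F x (w j)))\<^sup>2) \<le> Re (F x x)" for n
      using form_gs.residual_norm[OF x, of n] form_self_nonneg[of "hminus H x (form_proj H F w n x)"] x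
      by simp
  qed simp
  then obtain N where N: "\<And>m n. m \<ge> N \<Longrightarrow> norm (\<Sum>j\<in>{m..<n}. (cmod (F x (w j)))\<^sup>2) < \<epsilon>\<^sup>2"
    using \<open>0 < \<epsilon>\<close> unfolding summable_Cauchy by (meson zero_less_power)
  have *: "hnorm H (hminus H (partial_factor x n) (partial_factor x m)) < \<epsilon>" if "N \<le> m" "m \<le> n" for m n
  proof -
    have "(hnorm H (hminus H (partial_factor x n) (partial_factor x m)))\<^sup>2 < \<epsilon>\<^sup>2"
      using hnorm_partial_factor_diff[OF x that(2)] N[OF that(1), of n] by (simp add: sum_nonneg)
    then show ?thesis using \<open>0 < \<epsilon>\<close> by (simp add: power_less_imp_less_base)
  qed
  show ?thesis
  proof (intro exI allI impI)
    fix m n assume "N \<le> m" "N \<le> n"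
    then show "hnorm H (hminus H (partial_factor x m) (partial_factor x n)) < \<epsilon>"
      using *[of m n] *[of n m] hnorm_diff_commute[of "partial_factor x n" "partial_factor x m"]
      by (cases "m \<le> n") simp_all
  qed
qed

definition factor :: "'a \<Rightarrow> 'a" where
  "factor x = (SOME y. y \<in> hcarrier H \<and> converges (partial_factor x) y)"

lemma factor_converges:
  assumes "x \<in> hcarrier H"
  shows "factor x \<in> hcarrier H" and "converges (partial_factor x) (factor x)"
proof -
  have "\<exists>y. y \<in> hcarrier H \<and> converges (partial_factor x) y"
    using hilbert_space_convergent[OF hilbert partial_factor_closed partial_factor_Cauchy[OF assms]] by blast
  then have "factor x \<in> hcarrier H \<and> converges (partial_factor x) (factor x)"
    unfolding factor_def by (rule someI_ex)
  then show "factor x \<in> hcarrier H" and "converges (partial_factor x) (factor x)" by simp_all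
qed

lemma inner_factor: "x \<in> hcarrier H \<Longrightarrow> y \<in> hcarrier H \<Longrightarrow> hip H (factor x) (factor y) = F x y"
  by (rule LIMSEQ_unique[OF inner_tendsto inner_partial_factor_tendsto]) (simp_all add: factor_converges)

end

lemma (in psd_form) inner_factor_linear:
  assumes V: "\<And>x. x \<in> hcarrier H \<Longrightarrow> V x \<in> hcarrier H"
    and inner_V: "\<And>x y. x \<in> hcarrier H \<Longrightarrow> y \<in> hcarrier H \<Longrightarrow> hip H (V x) (V y) = F x y"
    and x: "x \<in> hcarrier H" and y: "y \<in> hcarrier H"
  shows "V (hplus H x y) = hplus H (V x) (V y)" and "V (hscale H a x) = hscale H a (V x)"
proof -
  define d where "d = hminus H (V (hplus H x y)) (hplus H (V x) (V y))"
  have "d \<in> hcarrier H" unfolding d_def using V x y by simp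
  moreover have "hip H d d = 0" unfolding d_def using V x y by (simp add: inner_V algebra_simps)
  ultimately have "d = hzero H" by (rule inner_self_eq_zeroD)
  then show "V (hplus H x y) = hplus H (V x) (V y)"
    unfolding d_def by (rule diff_eq_zeroD[rotated 2]) (simp_all add: V x y)
next
  define d where "d = hminus H (V (hscale H a x)) (hscale H a (V x))"
  have "d \<in> hcarrier H" unfolding d_def using V x by simp
  moreover have "hip H d d = 0" unfolding d_def using V x by (simp add: inner_V algebra_simps)
  ultimately have "d = hzero H" by (rule inner_self_eq_zeroD)
  then show "V (hscale H a x) = hscale H a (V x)"
    unfolding d_def by (rule diff_eq_zeroD[rotated 2]) (simp_all add: V x)
qed

lemma (in ip_space) psd_form_factorization:
  assumes "hilbert_space H" and "separable H" and "psd_form H F"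
    and "\<And>x. x \<in> hcarrier H \<Longrightarrow> Re (F x x) \<le> C * (hnorm H x)\<^sup>2"
  obtains V where "\<And>x. x \<in> hcarrier H \<Longrightarrow> V x \<in> hcarrier H"
    and "\<And>x y. x \<in> hcarrier H \<Longrightarrow> y \<in> hcarrier H \<Longrightarrow> hip H (V x) (V y) = F x y"
proof -
  obtain S where "countable S" and S: "S \<subseteq> hcarrier H"
    and dense: "\<And>x \<epsilon>. x \<in> hcarrier H \<Longrightarrow> 0 < \<epsilon> \<Longrightarrow> \<exists>s\<in>S. hnorm H (hminus H x s) < \<epsilon>"
    using \<open>separable H\<close> unfolding separable_def by blast
  have "S \<noteq> {}" using dense[OF zero_closed zero_less_one] by blast
  define d where "d = from_nat_into S"
  have "range d = S" unfolding d_def using range_from_nat_into[OF \<open>S \<noteq> {}\<close> \<open>countable S\<close>] .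
  then have d_closed: "d k \<in> hcarrier H" for k using S by blast
  have d_dense: "\<exists>k. hnorm H (hminus H x (d k)) < \<epsilon>" if "x \<in> hcarrier H" "0 < \<epsilon>" for x \<epsilon>
    using dense[OF that] \<open>range d = S\<close> by blast
  interpret fac: psd_form_factorization H F C d
    by (intro psd_form_factorization.intro assms(3) psd_form_factorization_axioms.intro assms(1,4)
        d_closed d_dense)
  show thesis by (rule that[of fac.factor]) (simp_all add: fac.factor_converges fac.inner_factor)
qed

section \<open>Reciprocals of log-convex power series\<close>

unbundle fps_syntax

lemma fps_inverse_convolution:
  fixes f :: "'a::field fps"
  assumes "f $ 0 = 1"
  shows "(\<Sum>n\<le>m. f $ n * inverse f $ (m - n)) = (if m = 0 then 1 else 0)"
  using fps_mult_nth[of f "inverse f" m] inverse_mult_eq_1'[of f] assms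
  by (simp add: atLeast0AtMost)

lemma fps_inverse_convolution_lessThan:
  fixes f :: "'a::field fps"
  assumes "f $ 0 = 1" and "0 < m"
  shows "(\<Sum>n<m. f $ n * inverse f $ (m - n)) = - f $ m"
  using fps_inverse_convolution[OF assms(1), of m] assms
  by (simp add: lessThan_Suc_atMost[symmetric] eq_neg_iff_add_eq_0)

lemma fps_inverse_nth_recurrence:
  fixes f :: "'a::field fps"
  assumes "f $ 0 = 1" and "0 < m"
  shows "inverse f $ m = - f $ m - (\<Sum>n\<in>{1..<m}. f $ n * inverse f $ (m - n))"
proof -
  have "(\<Sum>n<m. f $ n * inverse f $ (m - n)) = inverse f $ m + (\<Sum>n\<in>{1..<m}. f $ n * inverse f $ (m - n))"
    using assms by (simp add: lessThan_atLeast0 sum.atLeast_Suc_lessThan)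
  with fps_inverse_convolution_lessThan[OF assms] show ?thesis by (simp add: algebra_simps)
qed

lemma log_convex_mult_le:
  fixes a :: "nat \<Rightarrow> real"
  assumes pos: "\<And>n. 0 < a n" and log_convex: "\<And>n. (a (Suc n))\<^sup>2 \<le> a n * a (Suc (Suc n))"
    and "1 \<le> n" and "n \<le> m + 1"
  shows "a n * a m \<le> a (m + 1) * a (n - 1)"
proof -
  have "incseq (\<lambda>k. a (Suc k) / a k)"
  proof (rule incseq_SucI)
    show "a (Suc k) / a k \<le> a (Suc (Suc k)) / a (Suc k)" for k
      using log_convex[of k] pos[of k] pos[of "Suc k"] by (simp add: field_simps power2_eq_square)
  qed
  then have "a (Suc (n - 1)) / a (n - 1) \<le> a (Suc m) / a m"
    using \<open>n \<le> m + 1\<close> by (elim incseqD) simp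
  then show ?thesis
    using pos[of m] pos[of "n - 1"] \<open>1 \<le> n\<close> by (simp add: field_simps)
qed

lemma log_convex_fps_inverse_nth_nonpos:
  fixes f :: "real fps"
  assumes f0: "f $ 0 = 1" and pos: "\<And>n. 0 < f $ n"
    and log_convex: "\<And>n. (f $ Suc n)\<^sup>2 \<le> f $ n * f $ Suc (Suc n)"
    and "0 < m"
  shows "inverse f $ m \<le> 0"
  using \<open>0 < m\<close>
proof (induction m rule: less_induct)
  case (less m)
  define b where "b k = - inverse f $ k" for k
  have conv: "(\<Sum>n<k. f $ n * b (k - n)) = f $ k" if "0 < k" for k
    using fps_inverse_convolution_lessThan[OF f0 that] by (simp add: b_def sum_negf)
  obtain k where m: "m = Suc k" using \<open>0 < m\<close> by (cases m) simp_all
  have "(\<Sum>n\<in>{1..<m}. f $ n * b (m - n)) \<le> f $ m"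
  proof (cases "k = 0")
    case False
    have "(\<Sum>n\<in>{1..<m}. f $ n * b (m - n)) * f $ k = (\<Sum>n\<in>{1..<m}. (f $ n * f $ k) * b (m - n))"
      unfolding sum_distrib_right by (simp add: mult_ac)
    also have "\<dots> \<le> (\<Sum>n\<in>{1..<m}. (f $ (k + 1) * f $ (n - 1)) * b (m - n))"
    proof (rule sum_mono, rule mult_right_mono)
      fix n assume n: "n \<in> {1..<m}"
      show "f $ n * f $ k \<le> f $ (k + 1) * f $ (n - 1)"
        using log_convex_mult_le[of "fps_nth f"] pos log_convex n m by simp
      show "0 \<le> b (m - n)" unfolding b_def using less.IH[of "m - n"] n by simp
    qed
    also have "\<dots> = (\<Sum>n<k. (f $ (k + 1) * f $ n) * b (k - n))"
      unfolding m using sum.shift_bounds_Suc_ivl[of "\<lambda>n. (f $ (k + 1) * f $ (n - 1)) * b (Suc k - n)" 0 k]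
      by (simp add: atLeast0LessThan)
    also have "\<dots> = f $ (k + 1) * (\<Sum>n<k. f $ n * b (k - n))"
      by (simp add: sum_distrib_left mult.assoc)
    also have "\<dots> = f $ m * f $ k" using conv[of k] False m by simp
    finally show ?thesis using pos[of k] by simp
  qed (simp add: m less_imp_le[OF pos])
  moreover have "b m = f $ m - (\<Sum>n\<in>{1..<m}. f $ n * b (m - n))"
    using fps_inverse_nth_recurrence[OF f0 \<open>0 < m\<close>] by (simp add: b_def sum_negf)
  ultimately show ?case by (simp add: b_def)
qed

lemma log_convex_fps_inverse_partial_convolution:
  fixes f :: "real fps"
  assumes f0: "f $ 0 = 1" and pos: "\<And>n. 0 < f $ n"
    and log_convex: "\<And>n. (f $ Suc n)\<^sup>2 \<le> f $ n * f $ Suc (Suc n)"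
    and "N \<le> m"
  shows "\<bar>\<Sum>n<N. f $ n * inverse f $ (m - n)\<bar> \<le> f $ m"
proof (cases "m = 0")
  case True
  then show ?thesis using \<open>N \<le> m\<close> f0 by simp
next
  case False
  have nonpos: "f $ n * inverse f $ (m - n) \<le> 0" if "n < m" for n
    using log_convex_fps_inverse_nth_nonpos[OF f0 pos log_convex, of "m - n"] pos[of n] that
    by (simp add: mult_nonneg_nonpos)
  have "(\<Sum>n<N. - (f $ n * inverse f $ (m - n))) \<le> (\<Sum>n<m. - (f $ n * inverse f $ (m - n)))"
    using \<open>N \<le> m\<close> nonpos by (intro sum_mono2) auto
  then have "- (\<Sum>n<N. f $ n * inverse f $ (m - n)) \<le> - (\<Sum>n<m. f $ n * inverse f $ (m - n))"
    by (simp add: sum_negf)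
  also have "\<dots> = f $ m" using fps_inverse_convolution_lessThan[OF f0] False by simp
  finally have "- (\<Sum>n<N. f $ n * inverse f $ (m - n)) \<le> f $ m" .
  moreover have "(\<Sum>n<N. f $ n * inverse f $ (m - n)) \<le> 0"
    using \<open>N \<le> m\<close> nonpos by (intro sum_nonpos) auto
  ultimately show ?thesis by linarith
qed

lemma log_convex_fps_inverse_nth_abs_le:
  fixes f :: "real fps"
  assumes f0: "f $ 0 = 1" and pos: "\<And>n. 0 < f $ n"
    and log_convex: "\<And>n. (f $ Suc n)\<^sup>2 \<le> f $ n * f $ Suc (Suc n)"
  shows "\<bar>inverse f $ m\<bar> \<le> f $ m"
proof (cases "m = 0")
  case False
  then show ?thesis using log_convex_fps_inverse_partial_convolution[OF assms, of 1 m] f0 by simp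
qed (simp add: f0)

lemma suminf_shift_interchange:
  fixes a c :: "nat \<Rightarrow> real" and g :: "nat \<Rightarrow> complex" and N :: nat
  assumes summable_cg: "\<And>n. summable (\<lambda>j. c j * g (j + n))"
  defines "D m \<equiv> (\<Sum>n<N. if n \<le> m then a n * c (m - n) else 0)"
  shows "summable (\<lambda>m. g m * D m)" and "(\<Sum>n<N. a n * (\<Sum>j. c j * g (j + n))) = (\<Sum>m. g m * D m)"
proof -
  define f where "f n m = (if n \<le> m then c (m - n) * g m else 0)" for n m
  have f_sums: "f n sums (\<Sum>j. c j * g (j + n))" for n
  proof -
    have "(\<lambda>j. f n (j + n)) sums (\<Sum>j. c j * g (j + n))"
      unfolding f_def using summable_cg[of n] by (simp add: summable_sums)
    moreover have "(\<Sum>i<n. f n i) = 0" unfolding f_def by simp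
    ultimately show ?thesis using sums_iff_shift[of "f n" n] by simp
  qed
  have f_summable: "summable (f n)" for n using f_sums by (rule sums_summable)
  have D_eq: "g m * D m = (\<Sum>n<N. a n * f n m)" for m
    unfolding D_def f_def sum_distrib_left of_real_sum by (intro sum.cong) simp_all
  show "summable (\<lambda>m. g m * D m)" unfolding D_eq by (intro summable_sum summable_mult f_summable)
  have "(\<Sum>n<N. a n * (\<Sum>j. c j * g (j + n))) = (\<Sum>n<N. \<Sum>m. a n * f n m)"
    by (intro sum.cong refl) (simp add: sums_unique[OF f_sums] suminf_mult[OF f_summable])
  also have "\<dots> = (\<Sum>m. g m * D m)"
    unfolding D_eq by (rule suminf_sum[symmetric]) (intro summable_mult f_summable)
  finally show "(\<Sum>n<N. a n * (\<Sum>j. c j * g (j + n))) = (\<Sum>m. g m * D m)" .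
qed

text \<open>For power series \<open>A\<close>, \<open>C\<close> with \<open>A C = 1\<close>, this evaluates \<open>\<Sum>\<^sub>n a\<^sub>n \<Sum>\<^sub>j c\<^sub>j g\<^sub>j\<^sub>+\<^sub>n\<close>
  by summing along diagonals; the bound on the truncated convolutions controls the tails.\<close>

lemma sums_convolution_inverse:
  fixes a c G :: "nat \<Rightarrow> real" and g :: "nat \<Rightarrow> complex"
  assumes conv: "\<And>m. (\<Sum>n\<le>m. a n * c (m - n)) = (if m = 0 then 1 else 0)"
    and partial: "\<And>N m. N \<le> m \<Longrightarrow> \<bar>\<Sum>n<N. a n * c (m - n)\<bar> \<le> a m"
    and g_le: "\<And>m. cmod (g m) \<le> G m" and summable_aG: "summable (\<lambda>m. a m * G m)"
    and summable_cg: "\<And>n. summable (\<lambda>j. c j * g (j + n))"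
  shows "(\<lambda>n. a n * (\<Sum>j. c j * g (j + n))) sums g 0"
proof -
  define D where "D N m = (\<Sum>n<N. if n \<le> m then a n * c (m - n) else 0)" for N m
  have D_lower: "D N m = (if m = 0 then 1 else 0)" if "m < N" for N m
  proof -
    have "{n\<in>{..<N}. n \<le> m} = {..m}" using that by auto
    then show ?thesis unfolding D_def conv[of m, symmetric] sum.inter_filter[symmetric, OF finite_lessThan] by simp
  qed
  have D_upper: "\<bar>D N m\<bar> \<le> a m" if "N \<le> m" for N m
  proof -
    have "D N m = (\<Sum>n<N. a n * c (m - n))" unfolding D_def using that by (intro sum.cong) auto
    then show ?thesis using partial[OF that] by simp
  qed
  have partial_sum: "(\<Sum>n<N. a n * (\<Sum>j. c j * g (j + n))) = g 0 + (\<Sum>j. g (j + N) * D N (j + N))"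
    if "0 < N" for N
  proof -
    have "(\<Sum>n<N. a n * (\<Sum>j. c j * g (j + n))) = (\<Sum>m<N. g m * D N m) + (\<Sum>j. g (j + N) * D N (j + N))"
      using suminf_shift_interchange[OF summable_cg, where a = a and N = N, folded D_def]
        suminf_split_initial_segment[of "\<lambda>m. g m * D N m" N] by simp
    also have "(\<Sum>m<N. g m * D N m) = (\<Sum>m<N. if m = 0 then g m else 0)"
      by (intro sum.cong refl) (simp add: D_lower)
    finally show ?thesis using that by simp
  qed
  have tail_le: "norm (\<Sum>j. g (j + N) * D N (j + N)) \<le> (\<Sum>j. a (j + N) * G (j + N))" for N
  proof (rule norm_suminf_le)
    show "norm (g (j + N) * D N (j + N)) \<le> a (j + N) * G (j + N)" for j
      unfolding norm_mult using D_upper[of N "j + N"] g_le[of "j + N"] by (simp add: mult.commute mult_mono')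
    show "summable (\<lambda>j. a (j + N) * G (j + N))"
      using summable_aG summable_iff_shift[of "\<lambda>m. a m * G m" N] by simp
  qed
  show ?thesis unfolding sums_def
  proof (rule LIMSEQ_I)
    fix r :: real assume "0 < r"
    then obtain N0 where N0: "\<And>n. n \<ge> N0 \<Longrightarrow> norm (\<Sum>j. a (j + n) * G (j + n)) < r"
      using suminf_exist_split[OF _ summable_aG] by blast
    have "norm ((\<Sum>n<N. a n * (\<Sum>j. c j * g (j + n))) - g 0) < r" if "max N0 1 \<le> N" for N
      using partial_sum[of N] tail_le[of N] N0[of N] that by simp
    then show "\<exists>N0. \<forall>N\<ge>N0. norm ((\<Sum>n<N. a n * (\<Sum>j. c j * g (j + n))) - g 0) < r" by blast
  qed
qed

section \<open>The weighted Dirichlet space\<close>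

lemma dirichlet_carrier_iff: "f \<in> hcarrier (dirichlet \<alpha> E) \<longleftrightarrow>
   (\<forall>n. f n \<in> hcarrier E) \<and> summable (\<lambda>n. real (n + 1) powr \<alpha> * (hnorm E (f n))\<^sup>2)"
  and dirichlet_plus[simp]: "hplus (dirichlet \<alpha> E) f g = (\<lambda>n. hplus E (f n) (g n))"
  and dirichlet_scale[simp]: "hscale (dirichlet \<alpha> E) a f = (\<lambda>n. hscale E a (f n))"
  and dirichlet_zero[simp]: "hzero (dirichlet \<alpha> E) = (\<lambda>n. hzero E)"
  and dirichlet_inner:
    "hip (dirichlet \<alpha> E) f g = (\<Sum>n. complex_of_real (real (n + 1) powr \<alpha>) * hip E (f n) (g n))"
  unfolding dirichlet_def by simp_all

context ip_space
begin

lemma dirichlet_nth_closed: "f \<in> hcarrier (dirichlet \<alpha> H) \<Longrightarrow> f n \<in> hcarrier H"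
  by (simp add: dirichlet_carrier_iff)

lemma hnorm_add_sq_le: "x \<in> hcarrier H \<Longrightarrow> y \<in> hcarrier H \<Longrightarrow>
   (hnorm H (hplus H x y))\<^sup>2 \<le> 2 * ((hnorm H x)\<^sup>2 + (hnorm H y)\<^sup>2)"
proof -
  assume "x \<in> hcarrier H" "y \<in> hcarrier H"
  then have "(hnorm H (hplus H x y))\<^sup>2 \<le> (hnorm H x + hnorm H y)\<^sup>2"
    using hnorm_triangle by (intro power_mono) simp_all
  also have "\<dots> \<le> 2 * ((hnorm H x)\<^sup>2 + (hnorm H y)\<^sup>2)"
    using zero_le_power2[of "hnorm H x - hnorm H y"] by (simp add: power2_eq_square algebra_simps)
  finally show ?thesis .
qed

lemma cmod_inner_le_hnorm_sq: "x \<in> hcarrier H \<Longrightarrow> y \<in> hcarrier H \<Longrightarrow>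
   cmod (hip H x y) \<le> (hnorm H x)\<^sup>2 + (hnorm H y)\<^sup>2"
proof -
  assume "x \<in> hcarrier H" "y \<in> hcarrier H"
  then have "cmod (hip H x y) \<le> hnorm H x * hnorm H y" by (rule hnorm_cauchy_schwarz)
  also have "\<dots> \<le> (hnorm H x)\<^sup>2 + (hnorm H y)\<^sup>2"
  proof -
    have "(hnorm H x)\<^sup>2 + (hnorm H y)\<^sup>2 - 2 * (hnorm H x * hnorm H y) = (hnorm H x - hnorm H y)\<^sup>2"
      by (simp add: power2_eq_square algebra_simps)
    moreover have "0 \<le> hnorm H x * hnorm H y"
      using \<open>x \<in> hcarrier H\<close> \<open>y \<in> hcarrier H\<close> by simp
    ultimately show ?thesis using zero_le_power2[of "hnorm H x - hnorm H y"] by linarith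
  qed
  finally show ?thesis .
qed

lemma dirichlet_inner_summable:
  assumes f: "f \<in> hcarrier (dirichlet \<alpha> H)" and g: "g \<in> hcarrier (dirichlet \<alpha> H)"
  shows "summable (\<lambda>n. complex_of_real (real (n + 1) powr \<alpha>) * hip H (f n) (g n))"
proof (rule summable_comparison_test')
  show "summable (\<lambda>n. real (n + 1) powr \<alpha> * (hnorm H (f n))\<^sup>2 + real (n + 1) powr \<alpha> * (hnorm H (g n))\<^sup>2)"
    using f g by (intro summable_add) (simp_all add: dirichlet_carrier_iff)
  show "norm (complex_of_real (real (n + 1) powr \<alpha>) * hip H (f n) (g n))
      \<le> real (n + 1) powr \<alpha> * (hnorm H (f n))\<^sup>2 + real (n + 1) powr \<alpha> * (hnorm H (g n))\<^sup>2" for n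
    using mult_left_mono[OF cmod_inner_le_hnorm_sq[OF dirichlet_nth_closed[OF f] dirichlet_nth_closed[OF g]],
        of "real (n + 1) powr \<alpha>"]
    by (simp add: norm_mult distrib_left)
qed

lemma dirichlet_inner_sums:
  "f \<in> hcarrier (dirichlet \<alpha> H) \<Longrightarrow> g \<in> hcarrier (dirichlet \<alpha> H) \<Longrightarrow>
   (\<lambda>n. complex_of_real (real (n + 1) powr \<alpha>) * hip H (f n) (g n)) sums hip (dirichlet \<alpha> H) f g"
  unfolding dirichlet_inner by (rule summable_sums[OF dirichlet_inner_summable])

lemma dirichlet_inner_self:
  assumes f: "f \<in> hcarrier (dirichlet \<alpha> H)"
  shows "hip (dirichlet \<alpha> H) f f = complex_of_real (\<Sum>n. real (n + 1) powr \<alpha> * (hnorm H (f n))\<^sup>2)"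
proof -
  have "(\<lambda>n. complex_of_real (real (n + 1) powr \<alpha> * (hnorm H (f n))\<^sup>2)) sums
      complex_of_real (\<Sum>n. real (n + 1) powr \<alpha> * (hnorm H (f n))\<^sup>2)"
    using f by (subst sums_of_real_iff) (simp add: summable_sums dirichlet_carrier_iff)
  then show ?thesis
    using sums_unique2[OF dirichlet_inner_sums[OF f f]] dirichlet_nth_closed[OF f]
    by (simp add: inner_self_eq_hnorm_sq)
qed

lemma dirichlet_add_closed:
  assumes f: "f \<in> hcarrier (dirichlet \<alpha> H)" and g: "g \<in> hcarrier (dirichlet \<alpha> H)"
  shows "hplus (dirichlet \<alpha> H) f g \<in> hcarrier (dirichlet \<alpha> H)"
proof -
  let ?w = "\<lambda>n::nat. real (n + 1) powr \<alpha>"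
  have "summable (\<lambda>n. ?w n * (hnorm H (hplus H (f n) (g n)))\<^sup>2)"
  proof (rule summable_comparison_test')
    show "summable (\<lambda>n. 2 * (?w n * (hnorm H (f n))\<^sup>2 + ?w n * (hnorm H (g n))\<^sup>2))"
      using f g by (intro summable_mult summable_add) (simp_all add: dirichlet_carrier_iff)
    show "norm (?w n * (hnorm H (hplus H (f n) (g n)))\<^sup>2) \<le> 2 * (?w n * (hnorm H (f n))\<^sup>2 + ?w n * (hnorm H (g n))\<^sup>2)"
      for n
      using mult_left_mono[OF hnorm_add_sq_le[OF dirichlet_nth_closed[OF f] dirichlet_nth_closed[OF g]],
          of "?w n"]
      by (simp add: algebra_simps)
  qed
  then show ?thesis using f g by (simp add: dirichlet_carrier_iff)
qed

lemma dirichlet_scale_closed: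
  assumes f: "f \<in> hcarrier (dirichlet \<alpha> H)"
  shows "hscale (dirichlet \<alpha> H) a f \<in> hcarrier (dirichlet \<alpha> H)"
proof -
  have "summable (\<lambda>n. (cmod a)\<^sup>2 * (real (n + 1) powr \<alpha> * (hnorm H (f n))\<^sup>2))"
    using f by (intro summable_mult) (simp add: dirichlet_carrier_iff)
  then show ?thesis
    using f by (simp add: dirichlet_carrier_iff hnorm_scale power_mult_distrib mult_ac)
qed

lemma dirichlet_inner_add_left:
  assumes "f \<in> hcarrier (dirichlet \<alpha> H)" "g \<in> hcarrier (dirichlet \<alpha> H)" "h \<in> hcarrier (dirichlet \<alpha> H)"
  shows "hip (dirichlet \<alpha> H) (hplus (dirichlet \<alpha> H) f g) h = hip (dirichlet \<alpha> H) f h + hip (dirichlet \<alpha> H) g h"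
  using suminf_add[OF dirichlet_inner_summable[OF assms(1,3)] dirichlet_inner_summable[OF assms(2,3)]]
    dirichlet_nth_closed[OF assms(1)] dirichlet_nth_closed[OF assms(2)] dirichlet_nth_closed[OF assms(3)]
  by (simp add: dirichlet_inner distrib_left)

lemma dirichlet_inner_scale_left:
  assumes "f \<in> hcarrier (dirichlet \<alpha> H)" "g \<in> hcarrier (dirichlet \<alpha> H)"
  shows "hip (dirichlet \<alpha> H) (hscale (dirichlet \<alpha> H) a f) g = a * hip (dirichlet \<alpha> H) f g"
  using suminf_mult[OF dirichlet_inner_summable[OF assms], of a]
    dirichlet_nth_closed[OF assms(1)] dirichlet_nth_closed[OF assms(2)]
  by (simp add: dirichlet_inner mult_ac)

lemma dirichlet_inner_cnj:
  assumes "f \<in> hcarrier (dirichlet \<alpha> H)" "g \<in> hcarrier (dirichlet \<alpha> H)"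
  shows "hip (dirichlet \<alpha> H) g f = cnj (hip (dirichlet \<alpha> H) f g)"
proof -
  have "(\<lambda>n. complex_of_real (real (n + 1) powr \<alpha>) * hip H (g n) (f n)) sums cnj (hip (dirichlet \<alpha> H) f g)"
    using sums_cnj[THEN iffD2, OF dirichlet_inner_sums[OF assms]]
      dirichlet_nth_closed[OF assms(1)] dirichlet_nth_closed[OF assms(2)]
    by (simp add: inner_cnj[of "f _" "g _"])
  then show ?thesis by (rule sums_unique2[OF dirichlet_inner_sums[OF assms(2,1)]])
qed

lemma dirichlet_inner_self_nonneg:
  "f \<in> hcarrier (dirichlet \<alpha> H) \<Longrightarrow> Im (hip (dirichlet \<alpha> H) f f) = 0 \<and> 0 \<le> Re (hip (dirichlet \<alpha> H) f f)"
  using dirichlet_nth_closed by (simp add: dirichlet_inner_self suminf_nonneg dirichlet_carrier_iff)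

lemma dirichlet_inner_self_eq_zeroD:
  assumes f: "f \<in> hcarrier (dirichlet \<alpha> H)" and "hip (dirichlet \<alpha> H) f f = 0"
  shows "f = hzero (dirichlet \<alpha> H)"
proof -
  have summable: "summable (\<lambda>n. real (n + 1) powr \<alpha> * (hnorm H (f n))\<^sup>2)"
    using f by (simp add: dirichlet_carrier_iff)
  have "(\<Sum>n. real (n + 1) powr \<alpha> * (hnorm H (f n))\<^sup>2) = 0"
    using assms by (simp add: dirichlet_inner_self)
  then have "\<forall>n. real (n + 1) powr \<alpha> * (hnorm H (f n))\<^sup>2 = 0"
    using suminf_eq_zero_iff[OF summable] dirichlet_nth_closed[OF f] by simp
  then show ?thesis using hnorm_eq_zero_iff dirichlet_nth_closed[OF f] by auto
qed

lemma inner_product_space_dirichlet: "inner_product_space (dirichlet \<alpha> H)"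
proof -
  note nth = dirichlet_nth_closed
  have "(\<lambda>n. hzero H) \<in> hcarrier (dirichlet \<alpha> H)" by (simp add: dirichlet_carrier_iff)
  then show ?thesis
    unfolding inner_product_space_def
  proof (intro conjI ballI allI impI)
    fix f g assume "f \<in> hcarrier (dirichlet \<alpha> H)" and "g \<in> hcarrier (dirichlet \<alpha> H)"
    then show "hplus (dirichlet \<alpha> H) f g = hplus (dirichlet \<alpha> H) g f"
      using add_commute[OF nth nth] by auto
  qed (auto simp: nth add_assoc add_neg scale_scale scale_add_right scale_add_left
      dirichlet_add_closed[simplified] dirichlet_scale_closed[simplified]
      dirichlet_inner_add_left[simplified] dirichlet_inner_scale_left[simplified]
      intro: dirichlet_inner_cnj dest: dirichlet_inner_self_nonneg dirichlet_inner_self_eq_zeroD[simplified])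
qed

end

definition weighted_backward_shift :: "real \<Rightarrow> 'a chs \<Rightarrow> (nat \<Rightarrow> 'a) \<Rightarrow> nat \<Rightarrow> 'a" where
  "weighted_backward_shift \<alpha> E g n =
     hscale E (complex_of_real ((real (n + 2) / real (n + 1)) powr \<alpha>)) (g (Suc n))"

lemma weight_ratio_mult: "(real (n + 2) / real (n + 1)) powr \<alpha> * real (n + 1) powr \<alpha> = real (Suc n + 1) powr \<alpha>"
  by (simp add: powr_divide add.commute)

lemma weight_ratio_le: "0 \<le> \<alpha> \<Longrightarrow> (real (n + 2) / real (n + 1)) powr \<alpha> \<le> 2 powr \<alpha>"
  by (intro powr_mono2) (simp_all add: field_simps)

context ip_space
begin

lemma mult_z_closed:
  assumes "0 \<le> \<alpha>" and f: "f \<in> hcarrier (dirichlet \<alpha> H)"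
  shows "mult_z H f \<in> hcarrier (dirichlet \<alpha> H)"
proof -
  have "summable (\<lambda>m. real (Suc m + 1) powr \<alpha> * (hnorm H (f m))\<^sup>2)"
  proof (rule summable_comparison_test')
    show "summable (\<lambda>m. 2 powr \<alpha> * (real (m + 1) powr \<alpha> * (hnorm H (f m))\<^sup>2))"
      using f by (intro summable_mult) (simp add: dirichlet_carrier_iff)
    show "norm (real (Suc m + 1) powr \<alpha> * (hnorm H (f m))\<^sup>2) \<le> 2 powr \<alpha> * (real (m + 1) powr \<alpha> * (hnorm H (f m))\<^sup>2)"
      for m
      using mult_right_mono[OF weight_ratio_le[OF \<open>0 \<le> \<alpha>\<close>, of m], of "real (m + 1) powr \<alpha> * (hnorm H (f m))\<^sup>2"]
      unfolding weight_ratio_mult[symmetric] by (simp add: mult_ac)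
  qed
  then have "summable (\<lambda>n. real (n + 1) powr \<alpha> * (hnorm H (mult_z H f n))\<^sup>2)"
    by (subst summable_Suc_iff[symmetric]) (simp add: mult_z_def)
  then show ?thesis using f by (simp add: dirichlet_carrier_iff mult_z_def)
qed

lemma weighted_backward_shift_closed:
  assumes "0 \<le> \<alpha>" and g: "g \<in> hcarrier (dirichlet \<alpha> H)"
  shows "weighted_backward_shift \<alpha> H g \<in> hcarrier (dirichlet \<alpha> H)"
proof -
  define r where "r n = (real (n + 2) / real (n + 1)) powr \<alpha>" for n
  have "summable (\<lambda>n. real (n + 1) powr \<alpha> * (hnorm H (weighted_backward_shift \<alpha> H g n))\<^sup>2)"
  proof (rule summable_comparison_test')
    show "summable (\<lambda>n. 2 powr \<alpha> * (real (Suc n + 1) powr \<alpha> * (hnorm H (g (Suc n)))\<^sup>2))"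
      using g summable_Suc_iff[of "\<lambda>n. real (n + 1) powr \<alpha> * (hnorm H (g n))\<^sup>2"]
      by (intro summable_mult) (simp add: dirichlet_carrier_iff)
    fix n
    have "real (n + 1) powr \<alpha> * (hnorm H (weighted_backward_shift \<alpha> H g n))\<^sup>2
        = r n * (real (Suc n + 1) powr \<alpha> * (hnorm H (g (Suc n)))\<^sup>2)"
      using dirichlet_nth_closed[OF g] weight_ratio_mult[of n \<alpha>, symmetric]
      unfolding weighted_backward_shift_def r_def by (simp add: hnorm_scale power2_eq_square mult_ac)
    also have "\<dots> \<le> 2 powr \<alpha> * (real (Suc n + 1) powr \<alpha> * (hnorm H (g (Suc n)))\<^sup>2)"
      unfolding r_def using weight_ratio_le[OF \<open>0 \<le> \<alpha>\<close>] by (intro mult_right_mono) simp_all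
    finally show "norm (real (n + 1) powr \<alpha> * (hnorm H (weighted_backward_shift \<alpha> H g n))\<^sup>2)
        \<le> 2 powr \<alpha> * (real (Suc n + 1) powr \<alpha> * (hnorm H (g (Suc n)))\<^sup>2)" by simp
  qed
  then show ?thesis
    using g by (simp add: dirichlet_carrier_iff weighted_backward_shift_def del: of_nat_Suc)
qed

lemma inner_mult_z_left:
  assumes "0 \<le> \<alpha>" and f: "f \<in> hcarrier (dirichlet \<alpha> H)" and g: "g \<in> hcarrier (dirichlet \<alpha> H)"
  shows "hip (dirichlet \<alpha> H) (mult_z H f) g = hip (dirichlet \<alpha> H) f (weighted_backward_shift \<alpha> H g)"
proof -
  define l where "l n = complex_of_real (real (n + 1) powr \<alpha>) * hip H (mult_z H f n) (g n)" for n
  have "summable l" unfolding l_def by (rule dirichlet_inner_summable[OF mult_z_closed[OF assms(1,2)] g])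
  moreover have "l 0 = 0" unfolding l_def mult_z_def using dirichlet_nth_closed[OF g] by simp
  ultimately have "hip (dirichlet \<alpha> H) (mult_z H f) g = (\<Sum>m. l (Suc m))"
    unfolding dirichlet_inner l_def[symmetric] by (simp add: suminf_split_head)
  also have "\<dots> = hip (dirichlet \<alpha> H) f (weighted_backward_shift \<alpha> H g)"
    unfolding dirichlet_inner l_def mult_z_def weighted_backward_shift_def
    using dirichlet_nth_closed[OF f] dirichlet_nth_closed[OF g] weight_ratio_mult[of _ \<alpha>, symmetric]
    by (simp add: mult_ac del: of_nat_Suc)
  finally show ?thesis .
qed

lemma Dstar_eq:
  assumes "0 \<le> \<alpha>" and g: "g \<in> hcarrier (dirichlet \<alpha> H)"
  shows "Dstar \<alpha> H g = weighted_backward_shift \<alpha> H g"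
proof -
  interpret D: ip_space "dirichlet \<alpha> H" by unfold_locales (rule inner_product_space_dirichlet)
  show ?thesis unfolding Dstar_def
    using weighted_backward_shift_closed[OF assms(1)] inner_mult_z_left[OF assms(1)] g
    by (rule D.adjoint_eqI)
qed

end

section \<open>The model of \<open>T\<close> in \<open>\<D>\<^sub>\<alpha>\<^sub>,\<^sub>H\<close>\<close>

definition kernel_coeff :: "real \<Rightarrow> nat \<Rightarrow> real" where
  "kernel_coeff \<alpha> n = real (n + 1) powr (- \<alpha>)"

definition defect_coeff :: "real \<Rightarrow> nat \<Rightarrow> real" where
  "defect_coeff \<alpha> n = inverse (Abs_fps (kernel_coeff \<alpha>)) $ n"

lemma kernel_coeff_pos: "0 < kernel_coeff \<alpha> n"
  unfolding kernel_coeff_def by simp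

lemma kernel_coeff_0[simp]: "kernel_coeff \<alpha> 0 = 1"
  unfolding kernel_coeff_def by simp

lemma weight_mult_kernel_coeff: "real (n + 1) powr \<alpha> * kernel_coeff \<alpha> n = 1"
  unfolding kernel_coeff_def by (simp add: powr_minus field_simps)

lemma weight_ratio_mult_kernel_coeff:
  "(real (n + 2) / real (n + 1)) powr \<alpha> * kernel_coeff \<alpha> (Suc n) = kernel_coeff \<alpha> n"
  unfolding kernel_coeff_def by (simp add: powr_divide powr_minus divide_simps add_ac)

lemma kernel_coeff_log_convex:
  assumes "0 \<le> \<alpha>"
  shows "(kernel_coeff \<alpha> (Suc n))\<^sup>2 \<le> kernel_coeff \<alpha> n * kernel_coeff \<alpha> (Suc (Suc n))"
proof -
  have "(n + 1) * (n + 3) \<le> (n + 2) * (n + 2)" by (simp add: algebra_simps)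
  then have "real (n + 1) * real (n + 3) \<le> real (n + 2) * real (n + 2)" by (metis of_nat_le_iff of_nat_mult)
  then have "(real (n + 2) * real (n + 2)) powr (- \<alpha>) \<le> (real (n + 1) * real (n + 3)) powr (- \<alpha>)"
    using assms by (intro powr_mono2') simp_all
  then show ?thesis
    unfolding kernel_coeff_def by (simp add: powr_mult power2_eq_square numeral_eq_Suc add_ac)
qed

lemma defect_coeff_0[simp]: "defect_coeff \<alpha> 0 = 1"
  unfolding defect_coeff_def by simp

lemma kernel_defect_convolution:
  "(\<Sum>n\<le>m. kernel_coeff \<alpha> n * defect_coeff \<alpha> (m - n)) = (if m = 0 then 1 else 0)"
  using fps_inverse_convolution[of "Abs_fps (kernel_coeff \<alpha>)" m] unfolding defect_coeff_def by simp

lemma kernel_defect_partial_convolution: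
  "0 \<le> \<alpha> \<Longrightarrow> N \<le> m \<Longrightarrow> \<bar>\<Sum>n<N. kernel_coeff \<alpha> n * defect_coeff \<alpha> (m - n)\<bar> \<le> kernel_coeff \<alpha> m"
  using log_convex_fps_inverse_partial_convolution[of "Abs_fps (kernel_coeff \<alpha>)" N m]
  unfolding defect_coeff_def by (simp add: kernel_coeff_pos kernel_coeff_log_convex)

lemma defect_coeff_nonpos: "0 \<le> \<alpha> \<Longrightarrow> 0 < j \<Longrightarrow> defect_coeff \<alpha> j \<le> 0"
  using log_convex_fps_inverse_nth_nonpos[of "Abs_fps (kernel_coeff \<alpha>)" j]
  unfolding defect_coeff_def by (simp add: kernel_coeff_pos kernel_coeff_log_convex)

lemma abs_defect_coeff_le: "0 \<le> \<alpha> \<Longrightarrow> \<bar>defect_coeff \<alpha> j\<bar> \<le> kernel_coeff \<alpha> j"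
  using log_convex_fps_inverse_nth_abs_le[of "Abs_fps (kernel_coeff \<alpha>)" j]
  unfolding defect_coeff_def by (simp add: kernel_coeff_pos kernel_coeff_log_convex)

locale dirichlet_model = ip_space +
  fixes \<alpha> :: real and T :: "'a \<Rightarrow> 'a"
  assumes alpha_nonneg: "0 \<le> \<alpha>" and hilbert: "hilbert_space H" and separable: "separable H"
    and bounded_T: "bounded_op H T"
    and summable_opnorm: "summable (\<lambda>s. (opnorm H (T ^^ Suc s))\<^sup>2 / real (Suc s + 1) powr \<alpha>)"
    and sum_opnorm_le: "(\<Sum>s. (opnorm H (T ^^ Suc s))\<^sup>2 / real (Suc s + 1) powr \<alpha>) \<le> 1"
begin

abbreviation "a \<equiv> kernel_coeff \<alpha>"
abbreviation "c \<equiv> defect_coeff \<alpha>"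

lemma funpow_closed[simp]: "x \<in> hcarrier H \<Longrightarrow> (T ^^ n) x \<in> hcarrier H"
  by (rule bounded_op_closed[OF bounded_op_funpow[OF bounded_T]])

lemma funpow_add_apply[simp]: "x \<in> hcarrier H \<Longrightarrow> y \<in> hcarrier H \<Longrightarrow>
    (T ^^ n) (hplus H x y) = hplus H ((T ^^ n) x) ((T ^^ n) y)"
  by (rule bounded_op_add[OF bounded_op_funpow[OF bounded_T]])

lemma funpow_scale_apply[simp]: "x \<in> hcarrier H \<Longrightarrow> (T ^^ n) (hscale H z x) = hscale H z ((T ^^ n) x)"
  by (rule bounded_op_scale[OF bounded_op_funpow[OF bounded_T]])

lemma kernel_opnorm_shift:
  "a (Suc s) * (opnorm H (T ^^ Suc s))\<^sup>2 = (opnorm H (T ^^ Suc s))\<^sup>2 / real (Suc s + 1) powr \<alpha>"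
  unfolding kernel_coeff_def by (simp add: powr_minus_divide)

lemma summable_kernel_opnorm_Suc: "summable (\<lambda>s. a (Suc s) * (opnorm H (T ^^ Suc s))\<^sup>2)"
  and sum_kernel_opnorm_Suc_le: "(\<Sum>s. a (Suc s) * (opnorm H (T ^^ Suc s))\<^sup>2) \<le> 1"
  unfolding kernel_opnorm_shift by (fact summable_opnorm sum_opnorm_le)+

lemma summable_kernel_opnorm: "summable (\<lambda>j. a j * (opnorm H (T ^^ j))\<^sup>2)"
  using summable_kernel_opnorm_Suc summable_Suc_iff by blast

lemma cmod_inner_funpow_le:
  assumes x: "x \<in> hcarrier H" and y: "y \<in> hcarrier H"
  shows "cmod (hip H ((T ^^ j) x) ((T ^^ j) y)) \<le> (opnorm H (T ^^ j))\<^sup>2 * (hnorm H x * hnorm H y)"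
proof -
  have "cmod (hip H ((T ^^ j) x) ((T ^^ j) y)) \<le> hnorm H ((T ^^ j) x) * hnorm H ((T ^^ j) y)"
    using x y by (simp add: hnorm_cauchy_schwarz)
  also have "\<dots> \<le> (opnorm H (T ^^ j) * hnorm H x) * (opnorm H (T ^^ j) * hnorm H y)"
    using hnorm_apply_le_opnorm[OF bounded_op_funpow[OF bounded_T]] x y
      order_trans[OF hnorm_nonneg[OF funpow_closed[OF x]] hnorm_apply_le_opnorm[OF bounded_op_funpow[OF bounded_T] x]]
    by (intro mult_mono) simp_all
  finally show ?thesis by (simp add: power2_eq_square mult_ac)
qed

definition defect_form :: "'a \<Rightarrow> 'a \<Rightarrow> complex" where
  "defect_form x y = (\<Sum>j. complex_of_real (c j) * hip H ((T ^^ j) x) ((T ^^ j) y))"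

lemma defect_term_le:
  assumes "x \<in> hcarrier H" and "y \<in> hcarrier H"
  shows "cmod (complex_of_real (c j) * hip H ((T ^^ j) x) ((T ^^ j) y))
    \<le> a j * (opnorm H (T ^^ j))\<^sup>2 * (hnorm H x * hnorm H y)"
  using abs_defect_coeff_le[OF alpha_nonneg, of j] cmod_inner_funpow_le[OF assms, of j]
  by (simp add: norm_mult mult.assoc mult_mono)

lemma defect_form_sums:
  assumes "x \<in> hcarrier H" and "y \<in> hcarrier H"
  shows "(\<lambda>j. complex_of_real (c j) * hip H ((T ^^ j) x) ((T ^^ j) y)) sums defect_form x y"
  unfolding defect_form_def using defect_term_le[OF assms]
  by (intro summable_sums summable_comparison_test'[OF summable_mult2[OF summable_kernel_opnorm,
        of "hnorm H x * hnorm H y"]]) simp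

lemma defect_form_self:
  assumes x: "x \<in> hcarrier H"
  shows "defect_form x x = complex_of_real (\<Sum>j. c j * (hnorm H ((T ^^ j) x))\<^sup>2)"
proof -
  have "(\<lambda>j. complex_of_real (c j * (hnorm H ((T ^^ j) x))\<^sup>2)) sums defect_form x x"
    using defect_form_sums[OF x x] x by (simp add: inner_self_eq_hnorm_sq)
  moreover from this have "summable (\<lambda>j. c j * (hnorm H ((T ^^ j) x))\<^sup>2)"
    using sums_summable summable_complex_of_real by blast
  ultimately show ?thesis by (metis sums_of_real sums_unique2 summable_sums)
qed

text \<open>\<open>defect_form x x = \<parallel>x\<parallel>\<^sup>2 - \<Sum>\<^sub>j\<^sub>\<ge>\<^sub>1 |c j| \<parallel>T\<^sup>j x\<parallel>\<^sup>2\<close>,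
  where the subtracted series is dominated by \<open>\<Sum>\<^sub>j\<^sub>\<ge>\<^sub>1 a j \<parallel>T\<^sup>j\<parallel>\<^sup>2 \<parallel>x\<parallel>\<^sup>2 \<le> \<parallel>x\<parallel>\<^sup>2\<close>:
  this is where the hypothesis on the operator norms enters.\<close>

lemma defect_form_self_bounds:
  assumes x: "x \<in> hcarrier H"
  shows "0 \<le> Re (defect_form x x)" and "Re (defect_form x x) \<le> (hnorm H x)\<^sup>2"
proof -
  define r where "r j = c j * (hnorm H ((T ^^ j) x))\<^sup>2" for j
  define b where "b s = a (Suc s) * (opnorm H (T ^^ Suc s))\<^sup>2 * (hnorm H x)\<^sup>2" for s
  have "(\<lambda>j. complex_of_real (r j)) sums defect_form x x"
    using defect_form_sums[OF x x] x by (simp add: r_def inner_self_eq_hnorm_sq)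
  then have summable_r: "summable r" using sums_summable summable_complex_of_real by blast
  then have summable_r_Suc: "summable (\<lambda>s. r (Suc s))" by (simp add: summable_Suc_iff)
  have summable_b: "summable b"
    unfolding b_def by (intro summable_mult2 summable_kernel_opnorm_Suc)
  have re: "Re (defect_form x x) = (hnorm H x)\<^sup>2 + (\<Sum>s. r (Suc s))"
  proof -
    have "r 0 = (hnorm H x)\<^sup>2" by (simp add: r_def)
    then show ?thesis using defect_form_self[OF x, folded r_def] suminf_split_head[OF summable_r] by simp
  qed
  have "r (Suc s) \<le> 0" for s
    unfolding r_def using defect_coeff_nonpos[OF alpha_nonneg, of "Suc s"] by (simp add: mult_nonpos_nonneg)
  then have "(\<Sum>s. r (Suc s)) \<le> 0" using suminf_le[OF _ summable_r_Suc summable_zero] by simp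
  have "- b s \<le> r (Suc s)" for s
  proof -
    have "\<bar>r (Suc s)\<bar> = cmod (complex_of_real (c (Suc s)) * hip H ((T ^^ Suc s) x) ((T ^^ Suc s) x))"
      unfolding r_def using x by (simp add: inner_self_eq_hnorm_sq norm_mult abs_mult norm_power del: funpow.simps)
    also have "\<dots> \<le> b s"
      unfolding b_def using defect_term_le[OF x x, of "Suc s"] by (simp add: power2_eq_square del: funpow.simps)
    finally show ?thesis by simp
  qed
  then have "- (\<Sum>s. b s) \<le> (\<Sum>s. r (Suc s))"
    using suminf_le[OF _ summable_minus[OF summable_b] summable_r_Suc] by (simp add: suminf_minus[OF summable_b])
  moreover have "(\<Sum>s. b s) \<le> (hnorm H x)\<^sup>2"
    using mult_right_mono[OF sum_kernel_opnorm_Suc_le, of "(hnorm H x)\<^sup>2"]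
    unfolding b_def suminf_mult2[OF summable_kernel_opnorm_Suc, symmetric] by simp
  ultimately show "0 \<le> Re (defect_form x x)" and "Re (defect_form x x) \<le> (hnorm H x)\<^sup>2"
    using re \<open>(\<Sum>s. r (Suc s)) \<le> 0\<close> by linarith+
qed

lemma psd_form_defect_form: "psd_form H defect_form"
proof unfold_locales
  fix x y z assume x: "x \<in> hcarrier H" and y: "y \<in> hcarrier H" and z: "z \<in> hcarrier H"
  show "defect_form (hplus H x y) z = defect_form x z + defect_form y z"
    using sums_add[OF defect_form_sums[OF x z] defect_form_sums[OF y z]] x y z
    by (intro sums_unique2[OF defect_form_sums]) (simp_all add: distrib_left)
next
  fix z x y assume x: "x \<in> hcarrier H" and y: "y \<in> hcarrier H"
  show "defect_form (hscale H z x) y = z * defect_form x y"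
    using sums_mult[OF defect_form_sums[OF x y], of z] x y
    by (intro sums_unique2[OF defect_form_sums]) (simp_all add: mult_ac)
next
  fix x y assume x: "x \<in> hcarrier H" and y: "y \<in> hcarrier H"
  show "defect_form y x = cnj (defect_form x y)"
    using sums_cnj[THEN iffD2, OF defect_form_sums[OF x y]] x y
    by (intro sums_unique2[OF defect_form_sums[OF y x]]) (simp add: inner_cnj[of "(T ^^ _) x"])
next
  fix x assume "x \<in> hcarrier H"
  then show "Im (defect_form x x) = 0 \<and> 0 \<le> Re (defect_form x x)"
    using defect_form_self_bounds(1) by (simp add: defect_form_self)
qed

lemma kernel_sums_defect_form:
  assumes x: "x \<in> hcarrier H" and y: "y \<in> hcarrier H"
  shows "(\<lambda>n. complex_of_real (a n) * defect_form ((T ^^ n) x) ((T ^^ n) y)) sums hip H x y"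
proof -
  define g where "g m = hip H ((T ^^ m) x) ((T ^^ m) y)" for m
  have "defect_form ((T ^^ n) x) ((T ^^ n) y) = (\<Sum>j. complex_of_real (c j) * g (j + n))" for n
    using sums_unique[OF defect_form_sums[of "(T ^^ n) x" "(T ^^ n) y"]] x y
    by (simp add: g_def funpow_add)
  moreover have "(\<lambda>n. complex_of_real (a n) * (\<Sum>j. complex_of_real (c j) * g (j + n))) sums g 0"
  proof (rule sums_convolution_inverse)
    show "summable (\<lambda>m. a m * ((opnorm H (T ^^ m))\<^sup>2 * (hnorm H x * hnorm H y)))"
      using summable_mult2[OF summable_kernel_opnorm] by (simp add: mult.assoc)
    show "summable (\<lambda>j. complex_of_real (c j) * g (j + n))" for n
      using defect_form_sums[of "(T ^^ n) x" "(T ^^ n) y"] x y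
      by (simp add: g_def funpow_add sums_summable)
  qed (simp_all add: kernel_defect_convolution kernel_defect_partial_convolution alpha_nonneg g_def
      cmod_inner_funpow_le x y)
  ultimately show ?thesis by (simp add: g_def)
qed

end

locale dirichlet_model_factor = dirichlet_model +
  fixes V :: "'a \<Rightarrow> 'a"
  assumes V_closed[simp]: "\<And>x. x \<in> hcarrier H \<Longrightarrow> V x \<in> hcarrier H"
    and inner_V: "\<And>x y. x \<in> hcarrier H \<Longrightarrow> y \<in> hcarrier H \<Longrightarrow> hip H (V x) (V y) = defect_form x y"
begin

lemma V_add: "x \<in> hcarrier H \<Longrightarrow> y \<in> hcarrier H \<Longrightarrow> V (hplus H x y) = hplus H (V x) (V y)"
  and V_scale: "x \<in> hcarrier H \<Longrightarrow> V (hscale H z x) = hscale H z (V x)"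
  using psd_form.inner_factor_linear[OF psd_form_defect_form V_closed inner_V] by blast+

definition model_map :: "'a \<Rightarrow> nat \<Rightarrow> 'a" where
  "model_map x n = hscale H (complex_of_real (a n)) (V ((T ^^ n) x))"

lemma weighted_inner_model_map:
  assumes "x \<in> hcarrier H" and "y \<in> hcarrier H"
  shows "complex_of_real (real (n + 1) powr \<alpha>) * hip H (model_map x n) (model_map y n)
    = complex_of_real (a n) * defect_form ((T ^^ n) x) ((T ^^ n) y)"
proof -
  have "complex_of_real (real (n + 1) powr \<alpha>) * hip H (model_map x n) (model_map y n)
      = complex_of_real (real (n + 1) powr \<alpha> * a n * a n) * defect_form ((T ^^ n) x) ((T ^^ n) y)"
    unfolding model_map_def using assms by (simp add: inner_V mult_ac)
  also have "real (n + 1) powr \<alpha> * a n * a n = a n" using weight_mult_kernel_coeff[of n \<alpha>] by simp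
  finally show ?thesis .
qed

lemma model_map_closed: "x \<in> hcarrier H \<Longrightarrow> model_map x \<in> hcarrier (dirichlet \<alpha> H)"
proof -
  assume x: "x \<in> hcarrier H"
  have "(\<lambda>n. Re (complex_of_real (real (n + 1) powr \<alpha>) * hip H (model_map x n) (model_map x n))) sums Re (hip H x x)"
    unfolding weighted_inner_model_map[OF x x] by (rule sums_Re[OF kernel_sums_defect_form[OF x x]])
  then have "summable (\<lambda>n. real (n + 1) powr \<alpha> * (hnorm H (model_map x n))\<^sup>2)"
    using x by (simp add: sums_summable model_map_def inner_self_eq_hnorm_sq del: of_nat_Suc)
  then show ?thesis using x by (simp add: dirichlet_carrier_iff model_map_def)
qed

lemma inner_model_map:
  "x \<in> hcarrier H \<Longrightarrow> y \<in> hcarrier H \<Longrightarrow> hip (dirichlet \<alpha> H) (model_map x) (model_map y) = hip H x y"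
  unfolding dirichlet_inner weighted_inner_model_map by (rule sums_unique[OF kernel_sums_defect_form, symmetric])

lemma isometry_model_map: "isometry H (dirichlet \<alpha> H) model_map"
proof unfold_locales
  show "inner_product_space (dirichlet \<alpha> H)" by (rule inner_product_space_dirichlet)
qed (simp_all add: model_map_closed inner_model_map model_map_def fun_eq_iff V_add V_scale
    scale_add_right scale_scale mult.commute)

lemma Dstar_model_map:
  assumes x: "x \<in> hcarrier H"
  shows "Dstar \<alpha> H (model_map x) = model_map (T x)"
proof
  fix n
  have "T x \<in> hcarrier H" using bounded_op_closed[OF bounded_T x] .
  moreover have "(T ^^ Suc n) x = (T ^^ n) (T x)" by (simp only: funpow_Suc_right comp_def)
  ultimately show "Dstar \<alpha> H (model_map x) n = model_map (T x) n"
    unfolding Dstar_eq[OF alpha_nonneg model_map_closed[OF x]]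
    by (simp only: weighted_backward_shift_def model_map_def scale_scale V_closed funpow_closed
        of_real_mult[symmetric] weight_ratio_mult_kernel_coeff)
qed

end

theorem lemma4p1:
  fixes \<alpha> :: real and H :: "'h chs" and T :: "'h \<Rightarrow> 'h"
  assumes "0 < \<alpha>" and "\<alpha> \<le> 1"
    and "hilbert_space H" and "separable H"
    and "bounded_op H T"
    and "summable (\<lambda>s. (opnorm H (T ^^ Suc s))\<^sup>2 / real (Suc s + 1) powr \<alpha>)"
    and "(\<Sum>s. (opnorm H (T ^^ Suc s))\<^sup>2 / real (Suc s + 1) powr \<alpha>) \<le> 1"
  shows "\<exists>(E :: 'h chs) N. hilbert_space E \<and> separable E \<and>
           closed_subspace (dirichlet \<alpha> E) N \<and> Dstar \<alpha> E ` N \<subseteq> N \<and>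
           unitarily_equivalent H T (dirichlet \<alpha> E) N (Dstar \<alpha> E)"
proof -
  interpret dirichlet_model H \<alpha> T
    using assms(1,3-7) by unfold_locales (simp_all add: hilbert_space_def)
  obtain V where "\<And>x. x \<in> hcarrier H \<Longrightarrow> V x \<in> hcarrier H"
    and "\<And>x y. x \<in> hcarrier H \<Longrightarrow> y \<in> hcarrier H \<Longrightarrow> hip H (V x) (V y) = defect_form x y"
    using psd_form_factorization[OF hilbert separable psd_form_defect_form, of 1] defect_form_self_bounds(2)
    by auto
  then interpret dirichlet_model_factor H \<alpha> T V by unfold_locales
  interpret U: isometry H "dirichlet \<alpha> H" model_map by (rule isometry_model_map)
  have "Dstar \<alpha> H (model_map x) = model_map (T x)" "T x \<in> hcarrier H" if "x \<in> hcarrier H" for x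
    using Dstar_model_map bounded_op_closed[OF bounded_T] that by simp_all
  then show ?thesis
    using hilbert separable U.closed_subspace_image[OF hilbert] U.inj U.add U.scale U.inner
    unfolding unitarily_equivalent_def bij_betw_def by (intro exI[of _ H] exI[of _ "model_map ` hcarrier H"]) auto
qed

end
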